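(* Assume property (P$_R$) holds with constants $m_b$ and $\theta_R>0$, and $N\ge 2m_b$. Consider the semidiscrete scheme $$J a\,\ddot u=\mathbb D_{jk}(\alpha_{ijik}b)\,u+\mathrm{SAT},$$ $$\mathrm{SAT}=H^{-1}\sum_{f\in F}\big(e_f^T\,b\,D_{\hat n}\big)^T\gamma H_f\,(e_f^Tu-0)\;-\;H^{-1}\sum_{f\in F}e_f\,A\,\gamma\,H_f\,(e_f^Tu-0),$$ where on face $f$ (with its normal $\nu$) $$A=\frac1\gamma\sum_k|\nu_k|\Big(\tau_H\eta_k+\tau_R\frac{\eta_k^2}{(\eta_k)_{\min}}\Big),$$ and $\gamma, b, A$ in the face terms denote diagonal matrices of face values. If $$\tau_H\ge\frac{d}{h\,\theta_H},\qquad \tau_R\ge\frac{1}{h\,\theta_R},$$ then the scheme is stable in the following sense: the quantity $$E_D=E-\langle bD_{\hat n}u,\,u\rangle_{\Gamma',h}+\tfrac12\langle Au,\,u\rangle_{\Gamma',h}$$ satisfies $\frac{dE_D}{dt}=0$ along every solution, and $E_D\ge0$ for all $u,\dot u$.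
   Context: Summation convention: repeated subscript indices are summed from $1$ to $d$ unless "no sum" is stated. Every grid function (coefficient) is identified with the diagonal matrix of its grid values. One-dimensional SBP operators: on an equidistant grid of $N$ points with spacing $h$, let $e_\ell=(1,0,\dots,0)^T$, $e_r=(0,\dots,0,1)^T$, $H_\xi = h\,\mathrm{diag}(w_1,\dots,w_s,1,\dots,1,w_s,\dots,w_1)$ with all $w_i>0$, and $\theta_H:=w_1$. $D_\xi$ is an $N\times N$ matrix with $H_\xi D_\xi + D_\xi^T H_\xi = -e_\ell e_\ell^T + e_r e_r^T$; $\hat D_\xi$ is another $N\times N$ matrix and $\Delta D_\xi = D_\xi-\hat D_\xi$. For each grid function $c$, $D_{\xi\xi}(c)$ and $R_{\xi\xi}(c)$ are $N\times N$ matrices with $H_\xi D_{\xi\xi}(c) = -D_\xi^T H_\xi c D_\xi - R_{\xi\xi}(c) - e_\ell c_\ell e_\ell^T \hat D_\xi + e_r c_r e_r^T\hat D_\xi$ ($c_\ell,c_r$ the endpoint values of $c$), where $R_{\xi\xi}(c)$ depends linearly on $c$ and is symmetric positive semidefinite whenever $c\ge 0$ entrywise. Property (P$_R$): for all grid functions $c\ge 0$ on the one-dimensional grid and all $u$, $u^TR_{\xi\xi}(c)u\ge h\theta_R\,c_{\ell,\min}(e_\ell^T\Delta D_\xi u)^2+h\theta_R\,c_{r,\min}(e_r^T\Delta D_\xi u)^2$, where $c_{\ell,\min},c_{r,\min}$ are the minima of $c$ over the $m_b$ leftmost, resp. rightmost, grid points. Multi-dimensional operators: the reference domain $\Omega=[0,1]^d$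 carries the tensor-product grid with $N$ points and spacing $h$ in each direction. $D_i$, $\hat D_i$, $H_i$ are the Kronecker products $I\otimes\cdots\otimes X\otimes\cdots\otimes I$ with $X=D_\xi,\hat D_\xi,H_\xi$ respectively in the $i$th factor; $\Delta D_i=D_i-\hat D_i$; $H=H_\xi\otimes\cdots\otimes H_\xi$ ($d$ factors). For a grid function $c$, $D_{ii}(c)$ (resp. $\widetilde R_{ii}(c)$) applies $D_{\xi\xi}$ (resp. $R_{\xi\xi}$), with $c$ restricted to the line, along every grid line in direction $i$, and $R_{ii}(c)=H_i^{-1}H\widetilde R_{ii}(c)$. Define $\mathbb D_{jk}(c)=D_{jj}(c)$ if $j=k$ and $\mathbb D_{jk}(c)=D_j c D_k$ if $j\ne k$. Faces: $\Gamma_i^-=\{\xi_i=0\}$, $\Gamma_i^+=\{\xi_i=1\}$, $F$ the set of all $2d$ faces. For $f\in F$, $e_f$ is the restriction matrix such that $e_f^Tu$ is the vector of values of $u$ at the grid points of $f$; for $f=\Gamma_i^\pm$, $H_f$ is the Kronecker product of $d-1$ copies of $H_\xi$ (direction $i$ omitted), and $\nu=(\nu_1,\dots,\nu_d)$ is the outward unit normal of $f$ in reference coordinates ($\nu_i=\pm1$, other components $0$). Discrete forms: $\langle u,v\rangle_{\Omega,h}=u^THv$, $\langle u,v\rangle_{\Gamma,h}=\sum_{f\in F}(e_f^Tu)^TH_f(e_f^Tv)$, where in the term for face $f$ every occurrence of $\nu$ or of face-dependent quantities refers to face $f$ (also at edge and corner points); $\|u\|^2_{\Omega,h}=\langle u,u\rangle_{\Omega,h}$,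 $\|u\|^2_{\Gamma,h}=\langle u,u\rangle_{\Gamma,h}$. Geometry and coefficients: a smooth bijection $\vec x(\vec\xi)$ from $\Omega$ onto the physical domain $\Omega'$; $\mathcal J_{ij}=\partial x_j/\partial\xi_i$, $J=\det\mathcal J>0$, $\mathcal K_{ij}=\partial\xi_j/\partial x_i$; $\gamma>0$ on $\partial\Omega$ is defined by $d\Gamma'=\gamma\,d\Gamma$ (surface element ratio); $a>0$, $b>0$ are coefficient functions; all are evaluated at grid points and regarded as diagonal matrices. $\alpha_{ijkl}=\mathcal K_{ij}J\mathcal K_{kl}$. Physical forms: $\langle u,v\rangle_{\Omega',h}=\langle u,Jv\rangle_{\Omega,h}$, $\langle u,v\rangle_{\Gamma',h}=\langle u,\gamma v\rangle_{\Gamma,h}$, with associated squared (semi)norms. $D_{x_i}=\mathcal K_{ij}D_j$. The discrete normal derivative (used at boundary points, face by face) is $D_{\hat n}=\nu_j\frac{\alpha_{ijik}}{\gamma}D_k-\sum_k\nu_k\frac{\alpha_{ikik}}{\gamma}\Delta D_k$. Let $\eta_k=\alpha_{ikik}b$ (sum over $i$, no sum over $k$). At a grid point of a face $\Gamma_k^\pm$, $(\eta_k)_{\min}$ is the minimum of $\eta_k$ over the $m_b$ grid points closest to that face on the grid line in direction $k$ through that point (the term containing it is multiplied by $|\nu_k|$, so it is only needed on faces $\Gamma_k^\pm$). The discrete energy is $$E=\tfrac12\|\sqrt a\,\dot u\|^2_{\Omega',h}+\tfrac12\sum_i\|\sqrt b\,D_{x_i}u\|^2_{\Omega',h}+\tfrac12\sum_k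 u^TR_{kk}(\eta_k)u.$$ All coefficients are time-independent. *)

theory Defs
  imports "HOL-Analysis.Analysis"
begin

text \<open>One-dimensional grid: indices 0..N-1 (index 0 is the left end, N-1 the right end).
  Matrices are functions nat => nat => real, only entries with indices below N matter.
  H_xi = h diag(w), theta_H = w 0. Grid functions c are nat => real.\<close>

definition sbp_1d ::
  "nat \<Rightarrow> real \<Rightarrow> (nat \<Rightarrow> real) \<Rightarrow> nat \<Rightarrow> (nat \<Rightarrow> nat \<Rightarrow> real) \<Rightarrow> (nat \<Rightarrow> nat \<Rightarrow> real)
   \<Rightarrow> ((nat \<Rightarrow> real) \<Rightarrow> nat \<Rightarrow> nat \<Rightarrow> real) \<Rightarrow> ((nat \<Rightarrow> real) \<Rightarrow> nat \<Rightarrow> nat \<Rightarrow> real) \<Rightarrow> bool"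
where
  "sbp_1d N h w s D Dh Dxx R \<longleftrightarrow>
     \<comment> \<open>structure of the norm matrix H_xi = h diag(w_1..w_s,1,..,1,w_s..w_1)\<close>
     2 * s \<le> N \<and>
     (\<forall>i<N. 0 < w i) \<and>
     (\<forall>i<s. w (N - 1 - i) = w i) \<and>
     (\<forall>i. s \<le> i \<and> i < N - s \<longrightarrow> w i = 1) \<and>
     \<comment> \<open>SBP property H D + D^T H = - e_l e_l^T + e_r e_r^T\<close>
     (\<forall>i<N. \<forall>j<N. h * w i * D i j + D j i * (h * w j)
        = - (if i = 0 \<and> j = 0 then 1 else 0) + (if i = N - 1 \<and> j = N - 1 then 1 else 0)) \<and>
     \<comment> \<open>H D_xixi(c) = -D^T H c D - R(c) - e_l c_l e_l^T Dhat + e_r c_r e_r^T Dhat\<close>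
     (\<forall>c. \<forall>i<N. \<forall>j<N. h * w i * Dxx c i j
        = - (\<Sum>k<N. D k i * (h * w k) * c k * D k j) - R c i j
          - (if i = 0 then c 0 * Dh 0 j else 0)
          + (if i = N - 1 then c (N - 1) * Dh (N - 1) j else 0)) \<and>
     \<comment> \<open>R depends linearly on c\<close>
     (\<forall>c c' x y. \<forall>i<N. \<forall>j<N. R (\<lambda>k. x * c k + y * c' k) i j = x * R c i j + y * R c' i j) \<and>
     \<comment> \<open>R(c) symmetric positive semidefinite whenever c \<ge> 0\<close>
     (\<forall>c. (\<forall>k<N. 0 \<le> c k) \<longrightarrow>
        (\<forall>i<N. \<forall>j<N. R c i j = R c j i) \<and>
        (\<forall>u. 0 \<le> (\<Sum>i<N. \<Sum>j<N. u i * R c i j * u j)))"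

definition prop_PR ::
  "nat \<Rightarrow> real \<Rightarrow> (nat \<Rightarrow> nat \<Rightarrow> real) \<Rightarrow> (nat \<Rightarrow> nat \<Rightarrow> real)
   \<Rightarrow> ((nat \<Rightarrow> real) \<Rightarrow> nat \<Rightarrow> nat \<Rightarrow> real) \<Rightarrow> nat \<Rightarrow> real \<Rightarrow> bool"
where
  "prop_PR N h D Dh R mb thetaR \<longleftrightarrow>
     (\<forall>c u. (\<forall>k<N. 0 \<le> c k) \<longrightarrow>
        (\<Sum>i<N. \<Sum>j<N. u i * R c i j * u j)
          \<ge> h * thetaR * Min (c ` {..<mb}) * (\<Sum>j<N. (D 0 j - Dh 0 j) * u j)\<^sup>2
           + h * thetaR * Min (c ` {N - mb..<N}) * (\<Sum>j<N. (D (N - 1) j - Dh (N - 1) j) * u j)\<^sup>2)"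

text \<open>Directions are the elements of a finite type 'd, d = CARD('d).
  Grid points of [0,1]^d are functions p :: 'd => nat with p i < N.\<close>

definition grid :: "nat \<Rightarrow> ('d::finite \<Rightarrow> nat) set" where
  "grid N = {p. \<forall>i. p i < N}"

definition mv :: "nat \<Rightarrow> (('d::finite \<Rightarrow> nat) \<Rightarrow> ('d \<Rightarrow> nat) \<Rightarrow> real) \<Rightarrow> (('d \<Rightarrow> nat) \<Rightarrow> real)
                   \<Rightarrow> ('d \<Rightarrow> nat) \<Rightarrow> real" where
  "mv N M u p = (\<Sum>q\<in>grid N. M p q * u q)"

text \<open>Kronecker product I x ... x X x ... x I with X in the i-th factor.\<close>
definition kron :: "'d \<Rightarrow> (nat \<Rightarrow> nat \<Rightarrow> real) \<Rightarrow> ('d \<Rightarrow> nat) \<Rightarrow> ('d \<Rightarrow> nat) \<Rightarrow> real" where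
  "kron i X p q = (if (\<forall>k. k \<noteq> i \<longrightarrow> p k = q k) then X (p i) (q i) else 0)"

text \<open>Diagonal of H = H_xi x ... x H_xi.\<close>
definition Hfull :: "real \<Rightarrow> (nat \<Rightarrow> real) \<Rightarrow> ('d::finite \<Rightarrow> nat) \<Rightarrow> real" where
  "Hfull h w p = (\<Prod>k\<in>UNIV. h * w (p k))"

text \<open>Diagonal of the product of the H_xi over all directions except i
  (this is H_f for a face normal to direction i, and also H_i^{-1} H).\<close>
definition Hexcept :: "real \<Rightarrow> (nat \<Rightarrow> real) \<Rightarrow> 'd::finite \<Rightarrow> ('d \<Rightarrow> nat) \<Rightarrow> real" where
  "Hexcept h w i p = (\<Prod>k\<in>UNIV - {i}. h * w (p k))"

definition line_restrict :: "nat \<Rightarrow> 'd \<Rightarrow> ('d \<Rightarrow> nat) \<Rightarrow> (('d \<Rightarrow> nat) \<Rightarrow> real) \<Rightarrow> nat \<Rightarrow> real" where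
  "line_restrict N i p c = (\<lambda>j. if j < N then c (p(i := j)) else 0)"

text \<open>D_ii(c) and tilde R_ii(c): apply the 1D operator along every grid line in direction i.\<close>
definition Dii :: "nat \<Rightarrow> ((nat \<Rightarrow> real) \<Rightarrow> nat \<Rightarrow> nat \<Rightarrow> real) \<Rightarrow> 'd \<Rightarrow> (('d \<Rightarrow> nat) \<Rightarrow> real)
                    \<Rightarrow> ('d \<Rightarrow> nat) \<Rightarrow> ('d \<Rightarrow> nat) \<Rightarrow> real" where
  "Dii N Dxx i c p q =
     (if (\<forall>k. k \<noteq> i \<longrightarrow> p k = q k) then Dxx (line_restrict N i p c) (p i) (q i) else 0)"

text \<open>R_ii(c) = H_i^{-1} H tilde R_ii(c).\<close>
definition Rii :: "nat \<Rightarrow> real \<Rightarrow> (nat \<Rightarrow> real) \<Rightarrow> ((nat \<Rightarrow> real) \<Rightarrow> nat \<Rightarrow> nat \<Rightarrow> real) \<Rightarrow> 'd::finite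
                    \<Rightarrow> (('d \<Rightarrow> nat) \<Rightarrow> real) \<Rightarrow> ('d \<Rightarrow> nat) \<Rightarrow> ('d \<Rightarrow> nat) \<Rightarrow> real" where
  "Rii N h w R i c p q = Hexcept h w i p * Dii N R i c p q"

definition DD :: "nat \<Rightarrow> (nat \<Rightarrow> nat \<Rightarrow> real) \<Rightarrow> ((nat \<Rightarrow> real) \<Rightarrow> nat \<Rightarrow> nat \<Rightarrow> real) \<Rightarrow> 'd::finite \<Rightarrow> 'd
                   \<Rightarrow> (('d \<Rightarrow> nat) \<Rightarrow> real) \<Rightarrow> ('d \<Rightarrow> nat) \<Rightarrow> ('d \<Rightarrow> nat) \<Rightarrow> real" where
  "DD N D Dxx j k c p q =
     (if j = k then Dii N Dxx j c p q
      else (\<Sum>r\<in>grid N. kron j D p r * c r * kron k D r q))"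

text \<open>A face is (i, s): s = False is Gamma_i^- = {xi_i = 0}, s = True is Gamma_i^+ = {xi_i = 1}.\<close>
definition facepts :: "nat \<Rightarrow> 'd::finite \<times> bool \<Rightarrow> ('d \<Rightarrow> nat) set" where
  "facepts N f = {p \<in> grid N. p (fst f) = (if snd f then N - 1 else 0)}"

definition nu :: "'d::finite \<times> bool \<Rightarrow> real^'d" where
  "nu f = (\<chi> j. if j = fst f then (if snd f then 1 else -1) else 0)"

definition side_idx :: "nat \<Rightarrow> nat \<Rightarrow> 'd \<times> bool \<Rightarrow> nat set" where
  "side_idx N mb f = (if snd f then {N - mb..<N} else {..<mb})"

text \<open>Jm p is the Jacobian matrix (Jm p)\$i\$j = dx_j/dxi_i at the grid point p;
  J = det Jm, K = Jm^{-1} (K_ij = dxi_j/dx_i).\<close>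
definition Kmat :: "(('d::finite \<Rightarrow> nat) \<Rightarrow> real^'d^'d) \<Rightarrow> ('d \<Rightarrow> nat) \<Rightarrow> real^'d^'d" where
  "Kmat Jm p = matrix_inv (Jm p)"

definition Jdet :: "(('d::finite \<Rightarrow> nat) \<Rightarrow> real^'d^'d) \<Rightarrow> ('d \<Rightarrow> nat) \<Rightarrow> real" where
  "Jdet Jm p = det (Jm p)"

definition alpha :: "(('d::finite \<Rightarrow> nat) \<Rightarrow> real^'d^'d) \<Rightarrow> ('d \<Rightarrow> nat) \<Rightarrow> 'd \<Rightarrow> 'd \<Rightarrow> 'd \<Rightarrow> 'd \<Rightarrow> real" where
  "alpha Jm p i j k l = Kmat Jm p $ i $ j * Jdet Jm p * Kmat Jm p $ k $ l"

text \<open>Surface element ratio d Gamma' = gamma d Gamma at a point of face f (Nanson's formula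
  gamma = J |K nu|).\<close>
definition gam :: "(('d::finite \<Rightarrow> nat) \<Rightarrow> real^'d^'d) \<Rightarrow> 'd \<times> bool \<Rightarrow> ('d \<Rightarrow> nat) \<Rightarrow> real" where
  "gam Jm f p = Jdet Jm p * norm (Kmat Jm p *v nu f)"

definition eta :: "(('d::finite \<Rightarrow> nat) \<Rightarrow> real^'d^'d) \<Rightarrow> (('d \<Rightarrow> nat) \<Rightarrow> real) \<Rightarrow> 'd \<Rightarrow> ('d \<Rightarrow> nat) \<Rightarrow> real" where
  "eta Jm b k p = (\<Sum>i\<in>UNIV. alpha Jm p i k i k * b p)"

text \<open>(eta_k)_min at p on face f: minimum of eta_k over the mb grid points closest to f on the
  grid line in direction k through p (only used for k the normal direction of f).\<close>
definition etamin :: "nat \<Rightarrow> nat \<Rightarrow> (('d::finite \<Rightarrow> nat) \<Rightarrow> real^'d^'d) \<Rightarrow> (('d \<Rightarrow> nat) \<Rightarrow> real)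
                      \<Rightarrow> 'd \<times> bool \<Rightarrow> 'd \<Rightarrow> ('d \<Rightarrow> nat) \<Rightarrow> real" where
  "etamin N mb Jm b f k p = Min ((\<lambda>j. eta Jm b k (p(k := j))) ` side_idx N mb f)"

definition Apen :: "nat \<Rightarrow> nat \<Rightarrow> (('d::finite \<Rightarrow> nat) \<Rightarrow> real^'d^'d) \<Rightarrow> (('d \<Rightarrow> nat) \<Rightarrow> real)
                    \<Rightarrow> real \<Rightarrow> real \<Rightarrow> 'd \<times> bool \<Rightarrow> ('d \<Rightarrow> nat) \<Rightarrow> real" where
  "Apen N mb Jm b tauH tauR f p =
     1 / gam Jm f p * (\<Sum>k\<in>UNIV. \<bar>nu f $ k\<bar> *
        (tauH * eta Jm b k p + tauR * (eta Jm b k p)\<^sup>2 / etamin N mb Jm b f k p))"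

definition Dn :: "(nat \<Rightarrow> nat \<Rightarrow> real) \<Rightarrow> (nat \<Rightarrow> nat \<Rightarrow> real) \<Rightarrow> (('d::finite \<Rightarrow> nat) \<Rightarrow> real^'d^'d)
                  \<Rightarrow> 'd \<times> bool \<Rightarrow> ('d \<Rightarrow> nat) \<Rightarrow> ('d \<Rightarrow> nat) \<Rightarrow> real" where
  "Dn D Dh Jm f q r =
     (\<Sum>j\<in>UNIV. \<Sum>i\<in>UNIV. \<Sum>k\<in>UNIV. nu f $ j * alpha Jm q i j i k / gam Jm f q * kron k D q r)
   - (\<Sum>k\<in>UNIV. nu f $ k * (\<Sum>i\<in>UNIV. alpha Jm q i k i k) / gam Jm f q
        * kron k (\<lambda>x y. D x y - Dh x y) q r)"

definition Dx :: "nat \<Rightarrow> (nat \<Rightarrow> nat \<Rightarrow> real) \<Rightarrow> (('d::finite \<Rightarrow> nat) \<Rightarrow> real^'d^'d) \<Rightarrow> 'd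
                  \<Rightarrow> (('d \<Rightarrow> nat) \<Rightarrow> real) \<Rightarrow> ('d \<Rightarrow> nat) \<Rightarrow> real" where
  "Dx N D Jm i u p = (\<Sum>j\<in>UNIV. Kmat Jm p $ i $ j * mv N (kron j D) u p)"

definition ip_vol :: "nat \<Rightarrow> real \<Rightarrow> (nat \<Rightarrow> real) \<Rightarrow> (('d::finite \<Rightarrow> nat) \<Rightarrow> real^'d^'d)
                      \<Rightarrow> (('d \<Rightarrow> nat) \<Rightarrow> real) \<Rightarrow> (('d \<Rightarrow> nat) \<Rightarrow> real) \<Rightarrow> real" where
  "ip_vol N h w Jm u v = (\<Sum>p\<in>grid N. u p * Hfull h w p * (Jdet Jm p * v p))"

text \<open>Physical boundary form <u,v>_{Gamma',h} = <u, gamma v>_{Gamma,h}; the face-dependent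
  quantities u f, v f are evaluated for face f in the term for f.\<close>
definition ip_bdry :: "nat \<Rightarrow> real \<Rightarrow> (nat \<Rightarrow> real) \<Rightarrow> (('d::finite \<Rightarrow> nat) \<Rightarrow> real^'d^'d)
                       \<Rightarrow> ('d \<times> bool \<Rightarrow> ('d \<Rightarrow> nat) \<Rightarrow> real) \<Rightarrow> ('d \<times> bool \<Rightarrow> ('d \<Rightarrow> nat) \<Rightarrow> real) \<Rightarrow> real" where
  "ip_bdry N h w Jm u v =
     (\<Sum>f\<in>UNIV. \<Sum>p\<in>facepts N f. u f p * Hexcept h w (fst f) p * (gam Jm f p * v f p))"

definition energy :: "nat \<Rightarrow> real \<Rightarrow> (nat \<Rightarrow> real) \<Rightarrow> (nat \<Rightarrow> nat \<Rightarrow> real)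
                      \<Rightarrow> ((nat \<Rightarrow> real) \<Rightarrow> nat \<Rightarrow> nat \<Rightarrow> real) \<Rightarrow> (('d::finite \<Rightarrow> nat) \<Rightarrow> real^'d^'d)
                      \<Rightarrow> (('d \<Rightarrow> nat) \<Rightarrow> real) \<Rightarrow> (('d \<Rightarrow> nat) \<Rightarrow> real)
                      \<Rightarrow> (('d \<Rightarrow> nat) \<Rightarrow> real) \<Rightarrow> (('d \<Rightarrow> nat) \<Rightarrow> real) \<Rightarrow> real" where
  "energy N h w D R Jm a b u ud =
     1/2 * ip_vol N h w Jm (\<lambda>p. sqrt (a p) * ud p) (\<lambda>p. sqrt (a p) * ud p)
   + 1/2 * (\<Sum>i\<in>UNIV. ip_vol N h w Jm (\<lambda>p. sqrt (b p) * Dx N D Jm i u p)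
                                       (\<lambda>p. sqrt (b p) * Dx N D Jm i u p))
   + 1/2 * (\<Sum>k\<in>UNIV. \<Sum>p\<in>grid N. \<Sum>q\<in>grid N. u p * Rii N h w R k (eta Jm b k) p q * u q)"

definition energy_D :: "nat \<Rightarrow> real \<Rightarrow> (nat \<Rightarrow> real) \<Rightarrow> (nat \<Rightarrow> nat \<Rightarrow> real) \<Rightarrow> (nat \<Rightarrow> nat \<Rightarrow> real)
                      \<Rightarrow> ((nat \<Rightarrow> real) \<Rightarrow> nat \<Rightarrow> nat \<Rightarrow> real) \<Rightarrow> nat \<Rightarrow> (('d::finite \<Rightarrow> nat) \<Rightarrow> real^'d^'d)
                      \<Rightarrow> (('d \<Rightarrow> nat) \<Rightarrow> real) \<Rightarrow> (('d \<Rightarrow> nat) \<Rightarrow> real) \<Rightarrow> real \<Rightarrow> real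
                      \<Rightarrow> (('d \<Rightarrow> nat) \<Rightarrow> real) \<Rightarrow> (('d \<Rightarrow> nat) \<Rightarrow> real) \<Rightarrow> real" where
  "energy_D N h w D Dh R mb Jm a b tauH tauR u ud =
     energy N h w D R Jm a b u ud
   - ip_bdry N h w Jm (\<lambda>f p. b p * mv N (Dn D Dh Jm f) u p) (\<lambda>f p. u p)
   + 1/2 * ip_bdry N h w Jm (\<lambda>f p. Apen N mb Jm b tauH tauR f p * u p) (\<lambda>f p. u p)"

definition SAT :: "nat \<Rightarrow> real \<Rightarrow> (nat \<Rightarrow> real) \<Rightarrow> (nat \<Rightarrow> nat \<Rightarrow> real) \<Rightarrow> (nat \<Rightarrow> nat \<Rightarrow> real)
                   \<Rightarrow> nat \<Rightarrow> (('d::finite \<Rightarrow> nat) \<Rightarrow> real^'d^'d) \<Rightarrow> (('d \<Rightarrow> nat) \<Rightarrow> real)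
                   \<Rightarrow> real \<Rightarrow> real \<Rightarrow> (('d \<Rightarrow> nat) \<Rightarrow> real) \<Rightarrow> ('d \<Rightarrow> nat) \<Rightarrow> real" where
  "SAT N h w D Dh mb Jm b tauH tauR u p =
     1 / Hfull h w p * (\<Sum>f\<in>UNIV. \<Sum>q\<in>facepts N f.
        (b q * Dn D Dh Jm f q p) * gam Jm f q * Hexcept h w (fst f) q * (u q - 0))
   - 1 / Hfull h w p * (\<Sum>f\<in>UNIV. if p \<in> facepts N f then
        Apen N mb Jm b tauH tauR f p * gam Jm f p * Hexcept h w (fst f) p * (u p - 0) else 0)"

definition rhs :: "nat \<Rightarrow> real \<Rightarrow> (nat \<Rightarrow> real) \<Rightarrow> (nat \<Rightarrow> nat \<Rightarrow> real) \<Rightarrow> (nat \<Rightarrow> nat \<Rightarrow> real)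
                   \<Rightarrow> ((nat \<Rightarrow> real) \<Rightarrow> nat \<Rightarrow> nat \<Rightarrow> real) \<Rightarrow> nat \<Rightarrow> (('d::finite \<Rightarrow> nat) \<Rightarrow> real^'d^'d)
                   \<Rightarrow> (('d \<Rightarrow> nat) \<Rightarrow> real) \<Rightarrow> real \<Rightarrow> real \<Rightarrow> (('d \<Rightarrow> nat) \<Rightarrow> real) \<Rightarrow> ('d \<Rightarrow> nat) \<Rightarrow> real" where
  "rhs N h w D Dh Dxx mb Jm b tauH tauR u p =
     (\<Sum>j\<in>UNIV. \<Sum>k\<in>UNIV. mv N (DD N D Dxx j k (\<lambda>q. \<Sum>i\<in>UNIV. alpha Jm q i j i k * b q)) u p)
   + SAT N h w D Dh mb Jm b tauH tauR u p"

end

theory Submission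
  imports Defs
begin

text \<open>
  Summation by parts along every grid line (the SBP properties of \<open>D\<^sub>\<xi>\<close> and \<open>D\<^sub>\<xi>\<^sub>\<xi>(c)\<close>,
  lifted to the tensor-product grid) turns \<open>\<langle>u', J a u''\<rangle>\<close> into \<open>-B(u', u)\<close>, where \<open>B\<close> is the
  symmetric bilinear form built from the volume terms \<open>\<Sum>\<^sub>i \<parallel>\<surd>b D\<^sub>x\<^sub>i u\<parallel>\<^sup>2\<close>, the remainders
  \<open>R\<^sub>k\<^sub>k(\<eta>\<^sub>k)\<close> and the face terms created by the SAT. Hence \<open>E\<^sub>D = \<parallel>\<surd>a u'\<parallel>\<^sup>2/2 + B(u, u)/2\<close>
  is conserved.

  For \<open>B(u, u) \<ge> 0\<close> the indefinite face terms are estimated point by point with Young's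
  inequality. The cross term with the full normal derivative is absorbed by \<open>\<tau>\<^sub>H \<eta>\<^sub>k u\<^sup>2\<close> and a
  \<open>1/d\<close> share of the volume energy at that point: there the quadrature weight is
  \<open>h \<theta>\<^sub>H H\<^sub>f\<close>, and a grid point lies on at most \<open>d\<close> faces. The cross term with \<open>\<Delta>D\<^sub>k u\<close> is
  absorbed by \<open>\<tau>\<^sub>R \<eta>\<^sub>k\<^sup>2/(\<eta>\<^sub>k)\<^sub>m\<^sub>i\<^sub>n u\<^sup>2\<close> and, through property \<open>(P\<^sub>R)\<close>, by the remainder \<open>R\<^sub>k\<^sub>k(\<eta>\<^sub>k)\<close>.
\<close>

lemma finite_grid [simp]: "finite (grid N :: ('d::finite \<Rightarrow> nat) set)"
proof -
  have "grid N \<subseteq> Pi\<^sub>E UNIV (\<lambda>_. {..<N})"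
    by (auto simp: grid_def PiE_def extensional_def)
  then show ?thesis
    by (rule finite_subset) (simp add: finite_PiE)
qed

lemma fun_upd_in_grid: "p \<in> grid N \<Longrightarrow> m < N \<Longrightarrow> p(j := m) \<in> grid N"
  by (auto simp: grid_def)

lemma sum_grid_line:
  assumes p: "p \<in> grid N"
  shows "(\<Sum>q\<in>grid N. if (\<forall>k. k \<noteq> j \<longrightarrow> p k = q k) then g q else 0) = (\<Sum>m<N. g (p(j := m)))"
proof -
  have line: "{q \<in> grid N. \<forall>k. k \<noteq> j \<longrightarrow> p k = q k} = (\<lambda>m. p(j := m)) ` {..<N}"
  proof safe
    fix q assume q: "q \<in> grid N" "\<forall>k. k \<noteq> j \<longrightarrow> p k = q k"
    then have "q = p(j := q j)" and "q j < N"
      by (auto simp: fun_eq_iff grid_def)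
    then show "q \<in> (\<lambda>m. p(j := m)) ` {..<N}"
      by blast
  qed (use p in \<open>auto simp: grid_def\<close>)
  have "(\<Sum>q\<in>grid N. if (\<forall>k. k \<noteq> j \<longrightarrow> p k = q k) then g q else 0)
      = (\<Sum>q\<in>(\<lambda>m. p(j := m)) ` {..<N}. g q)"
    unfolding line[symmetric] by (simp add: sum.inter_filter)
  also have "\<dots> = (\<Sum>m<N. g (p(j := m)))"
    by (rule sum.reindex_cong[where l = "\<lambda>m. p(j := m)"]) (auto simp: inj_on_def fun_eq_iff)
  finally show ?thesis .
qed

lemma sum_grid_by_lines:
  assumes "0 < N"
  shows "(\<Sum>p\<in>grid N. F p) = (\<Sum>p\<in>{p \<in> grid N. p j = 0}. \<Sum>m<N. F (p(j := m)))"
proof -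
  have "finite {p \<in> grid N. p j = 0}" "(\<lambda>p. p(j := 0)) ` grid N \<subseteq> {p \<in> grid N. p j = 0}"
    using assms by (simp_all add: image_subset_iff grid_def[symmetric] fun_upd_in_grid)
  then have "(\<Sum>p\<in>grid N. F p) = (\<Sum>p0\<in>{p \<in> grid N. p j = 0}. sum F {p \<in> grid N. p(j := 0) = p0})"
    by (rule sum.group[OF finite_grid, symmetric])
  also have "\<dots> = (\<Sum>p0\<in>{p \<in> grid N. p j = 0}. \<Sum>m<N. F (p0(j := m)))"
  proof (rule sum.cong[OF refl])
    fix p0 assume p0: "p0 \<in> {p \<in> grid N. p j = 0}"
    have "{p \<in> grid N. p(j := 0) = p0} = (\<lambda>m. p0(j := m)) ` {..<N}"
    proof (intro set_eqI iffI)
      fix p assume "p \<in> {p \<in> grid N. p(j := 0) = p0}"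
      then have "p = p0(j := p j)" and "p j < N"
        by (auto simp: grid_def)
      then show "p \<in> (\<lambda>m. p0(j := m)) ` {..<N}"
        by blast
    qed (use p0 in \<open>auto simp: grid_def fun_eq_iff\<close>)
    moreover have "inj_on (\<lambda>m. p0(j := m)) {..<N}"
      by (auto simp: inj_on_def fun_eq_iff)
    ultimately show "sum F {p \<in> grid N. p(j := 0) = p0} = (\<Sum>m<N. F (p0(j := m)))"
      by (simp add: sum.reindex)
  qed
  finally show ?thesis .
qed

lemma facepts_subset_grid: "p \<in> facepts N f \<Longrightarrow> p \<in> grid N"
  by (simp add: facepts_def)

lemma sum_faces:
  "(\<Sum>f\<in>UNIV. \<Sum>p\<in>facepts N f. G f p)
   = (\<Sum>j\<in>UNIV. \<Sum>p\<in>grid N. (if p j = N - 1 then G (j, True) p else 0)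
                           + (if p j = 0 then G (j, False) p else 0))"
proof -
  have "(\<Sum>f\<in>UNIV. \<Sum>p\<in>facepts N f. G f p) = (\<Sum>j\<in>UNIV. \<Sum>s\<in>UNIV. \<Sum>p\<in>facepts N (j, s). G (j, s) p)"
    by (simp add: UNIV_Times_UNIV[symmetric] sum.cartesian_product del: UNIV_Times_UNIV)
  also have "\<dots> = (\<Sum>j\<in>UNIV. \<Sum>p\<in>facepts N (j, True). G (j, True) p)
                   + (\<Sum>j\<in>UNIV. \<Sum>p\<in>facepts N (j, False). G (j, False) p)"
    by (simp add: UNIV_bool sum.distrib add.commute)
  finally show ?thesis
    unfolding facepts_def by (simp add: sum.inter_filter sum.distrib)
qed

lemma sum_grid_if_facepts:
  "(\<Sum>r\<in>grid N. \<Sum>f\<in>UNIV. if r \<in> facepts N f then G f r else 0) = (\<Sum>f\<in>UNIV. \<Sum>r\<in>facepts N f. G f r)"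
proof -
  have inter: "grid N \<inter> facepts N f = facepts N f" for f
    by (auto simp: facepts_def)
  show ?thesis
    by (subst sum.swap) (simp only: sum.inter_restrict[OF finite_grid, symmetric] inter)
qed

lemma Hfull_eq_Hexcept: "Hfull h w p = h * w (p j) * Hexcept h w j p"
  unfolding Hfull_def Hexcept_def by (subst prod.remove[of UNIV j]) auto

lemma Hexcept_cong: "(\<forall>k. k \<noteq> j \<longrightarrow> p k = q k) \<Longrightarrow> Hexcept h w j p = Hexcept h w j q"
  unfolding Hexcept_def by (intro prod.cong) auto

lemma Hexcept_fun_upd [simp]: "Hexcept h w j (p(j := m)) = Hexcept h w j p"
  by (rule Hexcept_cong) auto

lemma mv_kron:
  assumes "p \<in> grid N"
  shows "mv N (kron j X) u p = (\<Sum>m<N. X (p j) m * u (p(j := m)))"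
proof -
  have "mv N (kron j X) u p
      = (\<Sum>q\<in>grid N. if (\<forall>k. k \<noteq> j \<longrightarrow> p k = q k) then X (p j) (q j) * u q else 0)"
    unfolding mv_def kron_def by (intro sum.cong) auto
  then show ?thesis
    using sum_grid_line[OF assms, of j "\<lambda>q. X (p j) (q j) * u q"] by simp
qed

lemma mv_sum: "mv N (\<lambda>p q. \<Sum>x\<in>X. F x p q) u p = (\<Sum>x\<in>X. mv N (F x) u p)"
  unfolding mv_def sum_distrib_right by (rule sum.swap)

lemma mv_cmult: "mv N (\<lambda>p q. c p * F p q) u p = c p * mv N F u p"
  unfolding mv_def by (simp add: sum_distrib_left mult_ac)

lemma mv_diff: "mv N (\<lambda>p q. F p q - G p q) u p = mv N F u p - mv N G u p"
  unfolding mv_def by (simp add: sum_subtractf left_diff_distrib)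

lemma mv_kron_diff:
  "mv N (kron k (\<lambda>x y. D x y - Dh x y)) u p = mv N (kron k D) u p - mv N (kron k Dh) u p"
  unfolding mv_def kron_def sum_subtractf[symmetric] by (intro sum.cong) (auto simp: algebra_simps)

lemma sum_grid_facepts_swap:
  "(\<Sum>r\<in>grid N. v r * (\<Sum>f\<in>UNIV. \<Sum>q\<in>facepts N f. M f q r * c f q))
   = (\<Sum>f\<in>UNIV. \<Sum>q\<in>facepts N f. mv N (M f) v q * c f q)"
proof -
  have "(\<Sum>r\<in>grid N. v r * (\<Sum>f\<in>UNIV. \<Sum>q\<in>facepts N f. M f q r * c f q))
      = (\<Sum>f\<in>UNIV. \<Sum>r\<in>grid N. \<Sum>q\<in>facepts N f. v r * (M f q r * c f q))"
    unfolding sum_distrib_left by (rule sum.swap)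
  also have "\<dots> = (\<Sum>f\<in>UNIV. \<Sum>q\<in>facepts N f. \<Sum>r\<in>grid N. v r * (M f q r * c f q))"
    by (rule sum.cong[OF refl], rule sum.swap)
  finally show ?thesis
    unfolding mv_def by (simp add: sum_distrib_left mult_ac)
qed

lemma sum_line_D_transpose:
  "(\<Sum>r\<in>grid N. v r * Hexcept h w j r * (\<Sum>m<N. D m (r j) * (h * w m) * c (r(j := m)) * g (r(j := m))))
   = (\<Sum>z\<in>grid N. Hfull h w z * c z * g z * mv N (kron j D) v z)"
proof -
  define F where "F r z = v r * Hexcept h w j r * (D (z j) (r j) * (h * w (z j)) * c z * g z)"
    for r z :: "'a \<Rightarrow> nat"
  have "(\<Sum>r\<in>grid N. v r * Hexcept h w j r * (\<Sum>m<N. D m (r j) * (h * w m) * c (r(j := m)) * g (r(j := m))))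
      = (\<Sum>r\<in>grid N. \<Sum>z\<in>grid N. if (\<forall>k. k \<noteq> j \<longrightarrow> r k = z k) then F r z else 0)"
    by (intro sum.cong refl) (simp add: sum_grid_line F_def sum_distrib_left)
  also have "\<dots> = (\<Sum>z\<in>grid N. \<Sum>r\<in>grid N. if (\<forall>k. k \<noteq> j \<longrightarrow> r k = z k) then F r z else 0)"
    by (rule sum.swap)
  also have "\<dots> = (\<Sum>z\<in>grid N. \<Sum>r\<in>grid N. Hfull h w z * c z * g z * (kron j D z r * v r))"
  proof (intro sum.cong refl)
    fix z r :: "'a \<Rightarrow> nat"
    show "(if (\<forall>k. k \<noteq> j \<longrightarrow> r k = z k) then F r z else 0)
        = Hfull h w z * c z * g z * (kron j D z r * v r)"
    proof (cases "\<forall>k. k \<noteq> j \<longrightarrow> r k = z k")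
      case True
      then have "Hexcept h w j r = Hexcept h w j z" and "\<forall>k. k \<noteq> j \<longrightarrow> z k = r k"
        by (auto intro: Hexcept_cong)
      with True show ?thesis
        unfolding F_def kron_def Hfull_eq_Hexcept[of h w z j] by (simp add: mult_ac)
    next
      case False
      moreover have "\<not> (\<forall>k. k \<noteq> j \<longrightarrow> z k = r k)"
        using False by auto
      ultimately show ?thesis
        unfolding kron_def by (simp only: if_False mult_zero_left mult_zero_right)
    qed
  qed
  also have "\<dots> = (\<Sum>z\<in>grid N. Hfull h w z * c z * g z * mv N (kron j D) v z)"
    unfolding mv_def by (simp add: sum_distrib_left)
  finally show ?thesis .
qed

lemma mv_Dii:
  assumes r: "r \<in> grid N"
  shows "mv N (Dii N X j c) u r = (\<Sum>m<N. X (line_restrict N j r c) (r j) m * u (r(j := m)))"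
proof -
  have "mv N (Dii N X j c) u r
      = (\<Sum>q\<in>grid N. if (\<forall>k. k \<noteq> j \<longrightarrow> r k = q k) then X (line_restrict N j r c) (r j) (q j) * u q else 0)"
    unfolding mv_def Dii_def by (intro sum.cong) auto
  then show ?thesis
    using sum_grid_line[OF r, of j "\<lambda>q. X (line_restrict N j r c) (r j) (q j) * u q"] by simp
qed

lemma sum_Rii_mult:
  assumes "r \<in> grid N"
  shows "(\<Sum>q\<in>grid N. Rii N h w R j c r q * u q)
       = Hexcept h w j r * (\<Sum>m<N. R (line_restrict N j r c) (r j) m * u (r(j := m)))"
  unfolding mv_Dii[OF assms, symmetric] Rii_def mv_def by (simp add: sum_distrib_left mult.assoc)

section \<open>Summation by parts\<close>

text \<open>The diagonal of \<open>H H\<^sub>j\<^sup>-\<^sup>1 (e\<^sub>r e\<^sub>r\<^sup>T - e\<^sub>l e\<^sub>l\<^sup>T)\<close> (with \<open>e\<^sub>l, e\<^sub>r\<close> acting in direction \<open>j\<close>), the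
  boundary term of the tensor-product SBP property.\<close>

definition bdry_weight :: "nat \<Rightarrow> real \<Rightarrow> (nat \<Rightarrow> real) \<Rightarrow> 'd::finite \<Rightarrow> ('d \<Rightarrow> nat) \<Rightarrow> real" where
  "bdry_weight N h w j p = Hexcept h w j p * ((if p j = N - 1 then 1 else 0) - (if p j = 0 then 1 else 0))"

locale sbp_operators =
  fixes N s mb :: nat
    and h thetaR :: real
    and w :: "nat \<Rightarrow> real"
    and D Dh :: "nat \<Rightarrow> nat \<Rightarrow> real"
    and Dxx R :: "(nat \<Rightarrow> real) \<Rightarrow> nat \<Rightarrow> nat \<Rightarrow> real"
  assumes sbp: "sbp_1d N h w s D Dh Dxx R"
    and PR: "prop_PR N h D Dh R mb thetaR"
    and thetaR_pos: "0 < thetaR"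
    and mb_pos: "1 \<le> mb"
    and N_mb: "N \<ge> 2 * mb"
    and h_def: "h = 1 / (real N - 1)"
begin

lemma N_ge_2: "N \<ge> 2"
  using mb_pos N_mb by linarith

lemma h_pos: "h > 0"
  using N_ge_2 h_def by auto

lemma w_pos: "i < N \<Longrightarrow> w i > 0"
  using sbp[unfolded sbp_1d_def, THEN conjunct2, THEN conjunct1] by blast

lemma w_last: "w (N - 1) = w 0"
proof (cases "s = 0")
  case True
  have "\<forall>i. s \<le> i \<and> i < N - s \<longrightarrow> w i = 1"
    using sbp[unfolded sbp_1d_def, THEN conjunct2, THEN conjunct2, THEN conjunct2, THEN conjunct1] .
  with True N_ge_2 show ?thesis
    by simp
next
  case False
  have "\<forall>i<s. w (N - 1 - i) = w i"
    using sbp[unfolded sbp_1d_def, THEN conjunct2, THEN conjunct2, THEN conjunct1] .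
  with False show ?thesis
    by simp
qed

lemma D_sbp:
  "i < N \<Longrightarrow> j < N \<Longrightarrow> h * w i * D i j + D j i * (h * w j)
     = - (if i = 0 \<and> j = 0 then 1 else 0) + (if i = N - 1 \<and> j = N - 1 then 1 else 0)"
  using sbp[unfolded sbp_1d_def, THEN conjunct2, THEN conjunct2, THEN conjunct2, THEN conjunct2,
            THEN conjunct1] by blast

lemma Dxx_sbp:
  "i < N \<Longrightarrow> j < N \<Longrightarrow> h * w i * Dxx c i j
     = - (\<Sum>k<N. D k i * (h * w k) * c k * D k j) - R c i j
       - (if i = 0 then c 0 * Dh 0 j else 0) + (if i = N - 1 then c (N - 1) * Dh (N - 1) j else 0)"
  using sbp[unfolded sbp_1d_def, THEN conjunct2, THEN conjunct2, THEN conjunct2, THEN conjunct2,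
            THEN conjunct2, THEN conjunct1] by blast

lemma R_sym: "(\<forall>k<N. 0 \<le> c k) \<Longrightarrow> i < N \<Longrightarrow> j < N \<Longrightarrow> R c i j = R c j i"
  using sbp[unfolded sbp_1d_def, THEN conjunct2, THEN conjunct2, THEN conjunct2, THEN conjunct2,
            THEN conjunct2, THEN conjunct2, THEN conjunct2] by blast

lemma R_lower_bound:
  "(\<forall>k<N. 0 \<le> c k) \<Longrightarrow>
     h * thetaR * Min (c ` {..<mb}) * (\<Sum>j<N. (D 0 j - Dh 0 j) * u j)\<^sup>2
     + h * thetaR * Min (c ` {N - mb..<N}) * (\<Sum>j<N. (D (N - 1) j - Dh (N - 1) j) * u j)\<^sup>2
     \<le> (\<Sum>i<N. \<Sum>j<N. u i * R c i j * u j)"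
  using PR unfolding prop_PR_def by blast

lemma Hexcept_pos: "p \<in> grid N \<Longrightarrow> Hexcept h w j p > 0"
  unfolding Hexcept_def using h_pos w_pos by (intro prod_pos) (auto simp: grid_def)

lemma Hfull_pos: "p \<in> grid N \<Longrightarrow> Hfull h w p > 0"
  unfolding Hfull_def using h_pos w_pos by (intro prod_pos) (auto simp: grid_def)

lemma kron_D_sbp:
  assumes p: "p \<in> grid N" and q: "q \<in> grid N"
  shows "Hfull h w p * kron j D p q + kron j D q p * Hfull h w q
       = (if p = q then bdry_weight N h w j p else 0)"
proof (cases "\<forall>k. k \<noteq> j \<longrightarrow> p k = q k")
  case False
  then have "p \<noteq> q" and "\<not> (\<forall>k. k \<noteq> j \<longrightarrow> q k = p k)"
    by auto
  with False show ?thesis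
    unfolding kron_def by auto
next
  case True
  have pj: "p j < N" and qj: "q j < N"
    using p q by (auto simp: grid_def)
  have same_pt: "p = q \<longleftrightarrow> p j = q j"
    using True by (auto simp: fun_eq_iff)
  have "Hexcept h w j q = Hexcept h w j p"
    using True by (intro Hexcept_cong) auto
  moreover have "\<forall>k. k \<noteq> j \<longrightarrow> q k = p k"
    using True by auto
  ultimately have "Hfull h w p * kron j D p q + kron j D q p * Hfull h w q
      = Hexcept h w j p * (h * w (p j) * D (p j) (q j) + D (q j) (p j) * (h * w (q j)))"
    unfolding kron_def using True
    by (simp add: Hfull_eq_Hexcept[of h w p j] Hfull_eq_Hexcept[of h w q j] algebra_simps)
  also have "\<dots> = (if p = q then bdry_weight N h w j p else 0)"
    unfolding D_sbp[OF pj qj] same_pt bdry_weight_def by auto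
  finally show ?thesis .
qed

lemma sum_kron_D_transpose:
  assumes z: "z \<in> grid N"
  shows "(\<Sum>r\<in>grid N. v r * Hfull h w r * kron j D r z)
       = - Hfull h w z * mv N (kron j D) v z + bdry_weight N h w j z * v z"
proof -
  have "v r * Hfull h w r * kron j D r z
      = (if r = z then bdry_weight N h w j z * v z else 0) - Hfull h w z * (kron j D z r * v r)"
    if r: "r \<in> grid N" for r
  proof -
    have "Hfull h w r * kron j D r z = (if r = z then bdry_weight N h w j z else 0) - kron j D z r * Hfull h w z"
      using kron_D_sbp[OF r z, of j] by auto
    then have "v r * (Hfull h w r * kron j D r z)
        = v r * ((if r = z then bdry_weight N h w j z else 0) - kron j D z r * Hfull h w z)"
      by (rule arg_cong)
    then show ?thesis
      by (auto simp: algebra_simps)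
  qed
  then show ?thesis
    using z by (simp add: sum_subtractf mv_def sum_distrib_left sum_negf)
qed

lemma Dxx_mult:
  assumes i: "i < N"
  shows "h * w i * (\<Sum>m<N. Dxx c i m * x m)
       = - (\<Sum>k<N. D k i * (h * w k) * c k * (\<Sum>m<N. D k m * x m))
         - (\<Sum>m<N. R c i m * x m)
         + ((if i = N - 1 then 1 else 0) - (if i = 0 then 1 else 0)) * c i * (\<Sum>m<N. Dh i m * x m)"
proof -
  let ?B = "((if i = N - 1 then 1 else 0) - (if i = 0 then 1 else 0)) * c i"
  have row: "h * w i * Dxx c i m = - (\<Sum>k<N. D k i * (h * w k) * c k * D k m) - R c i m + ?B * Dh i m"
    if m: "m < N" for m
  proof -
    have "- (if i = 0 then c 0 * Dh 0 m else 0) + (if i = N - 1 then c (N - 1) * Dh (N - 1) m else 0)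
        = ?B * Dh i m"
      using N_ge_2 by auto
    then show ?thesis
      using Dxx_sbp[OF i m, of c] by linarith
  qed
  have swap: "(\<Sum>m<N. (\<Sum>k<N. D k i * (h * w k) * c k * D k m) * x m)
      = (\<Sum>k<N. D k i * (h * w k) * c k * (\<Sum>m<N. D k m * x m))"
    unfolding sum_distrib_left sum_distrib_right by (subst sum.swap) (simp add: mult_ac)
  have "h * w i * (\<Sum>m<N. Dxx c i m * x m) = (\<Sum>m<N. (h * w i * Dxx c i m) * x m)"
    by (simp add: sum_distrib_left mult_ac)
  also have "\<dots> = (\<Sum>m<N. (- (\<Sum>k<N. D k i * (h * w k) * c k * D k m) - R c i m + ?B * Dh i m) * x m)"
    by (intro sum.cong refl) (simp add: row)
  also have "\<dots> = - (\<Sum>m<N. (\<Sum>k<N. D k i * (h * w k) * c k * D k m) * x m)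
         - (\<Sum>m<N. R c i m * x m) + ?B * (\<Sum>m<N. Dh i m * x m)"
    by (simp add: algebra_simps sum.distrib sum_subtractf sum_negf sum_distrib_left)
  finally show ?thesis
    unfolding swap by (simp add: mult.assoc)
qed

lemma Hfull_mv_Dii:
  assumes r: "r \<in> grid N"
  shows "Hfull h w r * mv N (Dii N Dxx j c) u r
       = - Hexcept h w j r * (\<Sum>m<N. D m (r j) * (h * w m) * c (r(j := m)) * mv N (kron j D) u (r(j := m)))
         - (\<Sum>q\<in>grid N. Rii N h w R j c r q * u q)
         + bdry_weight N h w j r * c r * mv N (kron j Dh) u r"
proof -
  let ?c = "line_restrict N j r c" and ?x = "\<lambda>m. u (r(j := m))" and ?E = "Hexcept h w j r"
  have rj: "r j < N"
    using r by (auto simp: grid_def)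
  have c_line: "?c m = c (r(j := m))" if "m < N" for m
    using that by (simp add: line_restrict_def)
  have D_line: "(\<Sum>k<N. D k (r j) * (h * w k) * ?c k * (\<Sum>m<N. D k m * ?x m))
      = (\<Sum>k<N. D k (r j) * (h * w k) * c (r(j := k)) * mv N (kron j D) u (r(j := k)))"
    by (intro sum.cong refl) (simp add: c_line mv_kron[OF fun_upd_in_grid[OF r]])
  have "Hfull h w r * mv N (Dii N Dxx j c) u r = ?E * (h * w (r j) * (\<Sum>m<N. Dxx ?c (r j) m * ?x m))"
    unfolding mv_Dii[OF r] Hfull_eq_Hexcept[of h w r j] by (simp add: mult_ac)
  also have "\<dots> = ?E * (- (\<Sum>k<N. D k (r j) * (h * w k) * ?c k * (\<Sum>m<N. D k m * ?x m))
         - (\<Sum>m<N. R ?c (r j) m * ?x m)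
         + ((if r j = N - 1 then 1 else 0) - (if r j = 0 then 1 else 0)) * ?c (r j) * (\<Sum>m<N. Dh (r j) m * ?x m))"
    by (simp only: Dxx_mult[OF rj])
  finally show ?thesis
    unfolding D_line sum_Rii_mult[OF r] mv_kron[OF r] bdry_weight_def c_line[OF rj]
    by (simp add: algebra_simps)
qed

lemma sum_mv_Dii:
  fixes u v c :: "('d::finite \<Rightarrow> nat) \<Rightarrow> real"
  shows "(\<Sum>r\<in>grid N. v r * Hfull h w r * mv N (Dii N Dxx j c) u r)
   = - (\<Sum>z\<in>grid N. Hfull h w z * c z * mv N (kron j D) u z * mv N (kron j D) v z)
     - (\<Sum>r\<in>grid N. \<Sum>q\<in>grid N. v r * Rii N h w R j c r q * u q)
     + (\<Sum>r\<in>grid N. bdry_weight N h w j r * v r * c r * mv N (kron j Dh) u r)"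
proof -
  let ?S = "\<lambda>r. \<Sum>m<N. D m (r j) * (h * w m) * c (r(j := m)) * mv N (kron j D) u (r(j := m))"
  have "(\<Sum>r\<in>grid N. v r * Hfull h w r * mv N (Dii N Dxx j c) u r)
      = (\<Sum>r\<in>grid N. - (v r * Hexcept h w j r * ?S r) - v r * (\<Sum>q\<in>grid N. Rii N h w R j c r q * u q)
                     + bdry_weight N h w j r * v r * c r * mv N (kron j Dh) u r)"
  proof (intro sum.cong refl)
    fix r :: "'d \<Rightarrow> nat" assume r: "r \<in> grid N"
    show "v r * Hfull h w r * mv N (Dii N Dxx j c) u r
        = - (v r * Hexcept h w j r * ?S r) - v r * (\<Sum>q\<in>grid N. Rii N h w R j c r q * u q)
          + bdry_weight N h w j r * v r * c r * mv N (kron j Dh) u r"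
      unfolding mult.assoc[of "v r" "Hfull h w r"] Hfull_mv_Dii[OF r] by (simp add: algebra_simps)
  qed
  also have "\<dots> = - (\<Sum>r\<in>grid N. v r * Hexcept h w j r * ?S r)
      - (\<Sum>r\<in>grid N. v r * (\<Sum>q\<in>grid N. Rii N h w R j c r q * u q))
      + (\<Sum>r\<in>grid N. bdry_weight N h w j r * v r * c r * mv N (kron j Dh) u r)"
    by (simp add: sum.distrib sum_subtractf sum_negf)
  also have "(\<Sum>r\<in>grid N. v r * (\<Sum>q\<in>grid N. Rii N h w R j c r q * u q))
      = (\<Sum>r\<in>grid N. \<Sum>q\<in>grid N. v r * Rii N h w R j c r q * u q)"
    by (simp add: sum_distrib_left mult.assoc)
  finally show ?thesis
    by (simp only: sum_line_D_transpose)
qed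

lemma Rii_sym:
  assumes p: "p \<in> grid N" and q: "q \<in> grid N" and c: "\<forall>x\<in>grid N. 0 \<le> c x"
  shows "Rii N h w R k c p q = Rii N h w R k c q p"
proof (cases "\<forall>j. j \<noteq> k \<longrightarrow> p j = q j")
  case True
  then have "\<forall>j. j \<noteq> k \<longrightarrow> q j = p j" and "Hexcept h w k p = Hexcept h w k q"
    by (auto intro: Hexcept_cong)
  moreover have "line_restrict N k p c = line_restrict N k q c"
  proof -
    have "p(k := j) = q(k := j)" for j
      using True by (auto simp: fun_eq_iff)
    then show ?thesis
      unfolding line_restrict_def by (intro ext) presburger
  qed
  moreover have "\<forall>j<N. 0 \<le> line_restrict N k p c j"
    using c fun_upd_in_grid[OF p] by (auto simp: line_restrict_def)
  then have "R (line_restrict N k p c) (p k) (q k) = R (line_restrict N k p c) (q k) (p k)"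
    using R_sym p q by (auto simp: grid_def)
  ultimately show ?thesis
    unfolding Rii_def Dii_def using True by simp
next
  case False
  moreover have "\<not> (\<forall>j. j \<noteq> k \<longrightarrow> q j = p j)"
    using False by auto
  ultimately show ?thesis
    unfolding Rii_def Dii_def by (simp only: if_False mult_zero_right)
qed

lemma mv_DD_offdiag:
  assumes "j \<noteq> k"
  shows "mv N (DD N D Dxx j k c) u r = (\<Sum>z\<in>grid N. kron j D r z * c z * mv N (kron k D) u z)"
proof -
  have "mv N (DD N D Dxx j k c) u r = (\<Sum>q\<in>grid N. \<Sum>z\<in>grid N. kron j D r z * c z * (kron k D z q * u q))"
    unfolding mv_def DD_def using assms by (simp add: sum_distrib_right sum_distrib_left mult_ac)
  also have "\<dots> = (\<Sum>z\<in>grid N. kron j D r z * c z * mv N (kron k D) u z)"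
    unfolding mv_def by (subst sum.swap) (simp add: sum_distrib_left)
  finally show ?thesis .
qed

lemma sum_mv_DD:
  fixes u v c :: "('d::finite \<Rightarrow> nat) \<Rightarrow> real"
  shows "(\<Sum>r\<in>grid N. v r * Hfull h w r * mv N (DD N D Dxx j k c) u r)
    = - (\<Sum>z\<in>grid N. Hfull h w z * c z * mv N (kron k D) u z * mv N (kron j D) v z)
      + (\<Sum>z\<in>grid N. bdry_weight N h w j z * v z * c z * mv N (kron k D) u z)
      - (if j = k then (\<Sum>z\<in>grid N. bdry_weight N h w j z * v z * c z
                                        * (mv N (kron j D) u z - mv N (kron j Dh) u z))
                      + (\<Sum>r\<in>grid N. \<Sum>q\<in>grid N. v r * Rii N h w R j c r q * u q)
         else 0)"
proof (cases "j = k")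
  case True
  then have "DD N D Dxx j k c = Dii N Dxx j c"
    by (simp add: fun_eq_iff DD_def)
  then have "(\<Sum>r\<in>grid N. v r * Hfull h w r * mv N (DD N D Dxx j k c) u r)
      = (\<Sum>r\<in>grid N. v r * Hfull h w r * mv N (Dii N Dxx j c) u r)"
    by simp
  with True show ?thesis
    unfolding sum_mv_Dii by (simp add: algebra_simps sum_subtractf)
next
  case False
  have "(\<Sum>r\<in>grid N. v r * Hfull h w r * mv N (DD N D Dxx j k c) u r)
      = (\<Sum>z\<in>grid N. \<Sum>r\<in>grid N. v r * Hfull h w r * kron j D r z * (c z * mv N (kron k D) u z))"
    unfolding mv_DD_offdiag[OF False] by (subst sum.swap) (simp add: sum_distrib_left mult_ac)
  also have "\<dots> = (\<Sum>z\<in>grid N. (- Hfull h w z * mv N (kron j D) v z + bdry_weight N h w j z * v z)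
                                 * (c z * mv N (kron k D) u z))"
    by (intro sum.cong refl) (simp add: sum_distrib_right[symmetric] sum_kron_D_transpose)
  also have "\<dots> = - (\<Sum>z\<in>grid N. Hfull h w z * c z * mv N (kron k D) u z * mv N (kron j D) v z)
      + (\<Sum>z\<in>grid N. bdry_weight N h w j z * v z * c z * mv N (kron k D) u z)"
    by (simp add: algebra_simps sum.distrib sum_subtractf sum_negf)
  finally show ?thesis
    using False by simp
qed

end

lemma sum_UNIV_single:
  "(\<And>j. j \<noteq> a \<Longrightarrow> G j = 0) \<Longrightarrow> (\<Sum>j\<in>(UNIV::'a::finite set). G j) = G a"
  by (subst sum.remove[of UNIV a]) (auto intro: sum.neutral)

lemma nu_nth: "nu f $ j = (if j = fst f then (if snd f then 1 else -1) else 0)"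
  by (simp add: nu_def)

definition metric_coef ::
  "(('d::finite \<Rightarrow> nat) \<Rightarrow> real^'d^'d) \<Rightarrow> (('d \<Rightarrow> nat) \<Rightarrow> real) \<Rightarrow> 'd \<Rightarrow> 'd \<Rightarrow> ('d \<Rightarrow> nat) \<Rightarrow> real"
  where "metric_coef Jm b j k p = (\<Sum>i\<in>UNIV. alpha Jm p i j i k * b p)"

lemma eta_eq_metric_coef: "eta Jm b k = metric_coef Jm b k k"
  by (simp add: fun_eq_iff eta_def metric_coef_def)

lemma metric_coef_Dx:
  "(\<Sum>k\<in>UNIV. metric_coef Jm b j k p * mv N (kron k D) u p)
   = Jdet Jm p * b p * (\<Sum>i\<in>UNIV. Kmat Jm p $ i $ j * Dx N D Jm i u p)"
proof -
  have "(\<Sum>k\<in>UNIV. metric_coef Jm b j k p * mv N (kron k D) u p)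
      = (\<Sum>k\<in>UNIV. \<Sum>i\<in>UNIV. Jdet Jm p * b p * (Kmat Jm p $ i $ j * (Kmat Jm p $ i $ k * mv N (kron k D) u p)))"
    unfolding metric_coef_def alpha_def by (simp add: sum_distrib_right sum_distrib_left mult_ac)
  also have "\<dots> = Jdet Jm p * b p * (\<Sum>i\<in>UNIV. Kmat Jm p $ i $ j * Dx N D Jm i u p)"
    unfolding Dx_def by (subst sum.swap) (simp add: sum_distrib_left)
  finally show ?thesis .
qed

lemma eta_eq_sum_Kmat_sq: "eta Jm b k p = Jdet Jm p * b p * (\<Sum>i\<in>UNIV. (Kmat Jm p $ i $ k)\<^sup>2)"
  unfolding eta_def alpha_def by (simp add: sum_distrib_left power2_eq_square mult_ac)

lemma ip_vol_commute: "ip_vol N h w Jm x y = ip_vol N h w Jm y x"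
  unfolding ip_vol_def by (simp add: mult_ac)

lemma ip_bdry_commute:
  "ip_bdry N h w Jm (\<lambda>f p. A f p * x p) (\<lambda>f p. y p) = ip_bdry N h w Jm (\<lambda>f p. A f p * y p) (\<lambda>f p. x p)"
  unfolding ip_bdry_def by (simp add: mult_ac)

lemma ip_vol_sqrt_weight:
  fixes c x y :: "('d::finite \<Rightarrow> nat) \<Rightarrow> real"
  assumes "\<forall>p\<in>grid N. 0 \<le> c p"
  shows "ip_vol N h w Jm (\<lambda>p. sqrt (c p) * x p) (\<lambda>p. sqrt (c p) * y p)
       = (\<Sum>p\<in>grid N. Hfull h w p * Jdet Jm p * c p * (x p * y p))"
  unfolding ip_vol_def
proof (intro sum.cong refl)
  fix p :: "'d \<Rightarrow> nat" assume "p \<in> grid N"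
  then have "sqrt (c p) * sqrt (c p) = c p"
    using assms by simp
  moreover have "sqrt (c p) * x p * Hfull h w p * (Jdet Jm p * (sqrt (c p) * y p))
      = Hfull h w p * Jdet Jm p * (sqrt (c p) * sqrt (c p)) * (x p * y p)"
    by (simp only: mult_ac)
  ultimately show "sqrt (c p) * x p * Hfull h w p * (Jdet Jm p * (sqrt (c p) * y p))
      = Hfull h w p * Jdet Jm p * c p * (x p * y p)"
    by simp
qed

lemma young_signed:
  fixes s t x y :: real
  assumes "s\<^sup>2 = 1" and "0 < t"
  shows "s * x * y \<le> t / 2 * x\<^sup>2 + y\<^sup>2 / (2 * t)"
proof -
  have "t / 2 * x\<^sup>2 + y\<^sup>2 / (2 * t) - s * x * y = (t * x - s * y)\<^sup>2 / (2 * t)"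
    using assms by (simp add: field_simps power2_eq_square)
  also have "\<dots> \<ge> 0"
    using assms by simp
  finally show ?thesis
    by simp
qed

lemma sum_cross_term_le:
  fixes s t e c z :: real
  assumes s: "s\<^sup>2 = 1" and e: "0 < e" and te: "1 \<le> t * e" and c: "0 \<le> c"
  shows "s * c * (\<Sum>i\<in>A. x i * y i) * z
       \<le> t / 2 * c * (\<Sum>i\<in>A. (x i)\<^sup>2) * z\<^sup>2 + e / 2 * c * (\<Sum>i\<in>A. (y i)\<^sup>2)"
proof -
  have t: "0 < t"
    using e te by (smt (verit) mult_nonpos_nonneg)
  have "s * (x i * z) * y i \<le> t / 2 * (x i * z)\<^sup>2 + e / 2 * (y i)\<^sup>2" for i
  proof -
    have "(y i)\<^sup>2 * 1 \<le> (y i)\<^sup>2 * (t * e)"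
      using te by (intro mult_left_mono) simp_all
    then have "(y i)\<^sup>2 / (2 * t) \<le> e / 2 * (y i)\<^sup>2"
      using t by (simp add: field_simps ac_simps)
    then show ?thesis
      using young_signed[OF s t, of "x i * z" "y i"] by linarith
  qed
  then have "s * (\<Sum>i\<in>A. x i * y i) * z \<le> t / 2 * (\<Sum>i\<in>A. (x i)\<^sup>2) * z\<^sup>2 + e / 2 * (\<Sum>i\<in>A. (y i)\<^sup>2)"
    using sum_mono[of A "\<lambda>i. s * (x i * z) * y i" "\<lambda>i. t / 2 * (x i * z)\<^sup>2 + e / 2 * (y i)\<^sup>2"]
    by (simp add: sum.distrib sum_distrib_left sum_distrib_right power_mult_distrib mult_ac)
  from mult_left_mono[OF this c] show ?thesis
    by (simp add: algebra_simps)
qed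

lemma has_real_derivative_mv:
  assumes "\<forall>q\<in>grid N. ((\<lambda>t. u t q) has_real_derivative u' q) (at t)"
  shows "((\<lambda>t. mv N M (u t) p) has_real_derivative mv N M u' p) (at t)"
  unfolding mv_def by (intro DERIV_sum DERIV_cmult) (use assms in auto)

lemma has_real_derivative_Dx:
  assumes "\<forall>q\<in>grid N. ((\<lambda>t. u t q) has_real_derivative u' q) (at t)"
  shows "((\<lambda>t. Dx N D Jm i (u t) p) has_real_derivative Dx N D Jm i u' p) (at t)"
  unfolding Dx_def by (intro DERIV_sum DERIV_cmult has_real_derivative_mv assms)

lemma has_real_derivative_ip_vol:
  fixes x y :: "real \<Rightarrow> ('d::finite \<Rightarrow> nat) \<Rightarrow> real"
  assumes x: "\<forall>p\<in>grid N. ((\<lambda>t. x t p) has_real_derivative x' p) (at t)"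
    and y: "\<forall>p\<in>grid N. ((\<lambda>t. y t p) has_real_derivative y' p) (at t)"
  shows "((\<lambda>t. ip_vol N h w Jm (x t) (y t))
           has_real_derivative ip_vol N h w Jm x' (y t) + ip_vol N h w Jm (x t) y') (at t)"
  unfolding ip_vol_def sum.distrib[symmetric]
proof (rule DERIV_sum)
  fix p :: "'d \<Rightarrow> nat" assume "p \<in> grid N"
  with x y show "((\<lambda>t. x t p * Hfull h w p * (Jdet Jm p * y t p)) has_real_derivative
      x' p * Hfull h w p * (Jdet Jm p * y t p) + x t p * Hfull h w p * (Jdet Jm p * y' p)) (at t)"
    by (auto intro!: derivative_eq_intros simp: algebra_simps)
qed

lemma has_real_derivative_ip_bdry:
  fixes x y :: "real \<Rightarrow> 'd::finite \<times> bool \<Rightarrow> ('d \<Rightarrow> nat) \<Rightarrow> real"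
  assumes x: "\<forall>f. \<forall>p\<in>facepts N f. ((\<lambda>t. x t f p) has_real_derivative x' f p) (at t)"
    and y: "\<forall>f. \<forall>p\<in>facepts N f. ((\<lambda>t. y t f p) has_real_derivative y' f p) (at t)"
  shows "((\<lambda>t. ip_bdry N h w Jm (x t) (y t))
           has_real_derivative ip_bdry N h w Jm x' (y t) + ip_bdry N h w Jm (x t) y') (at t)"
  unfolding ip_bdry_def sum.distrib[symmetric]
proof (intro DERIV_sum)
  fix f :: "'d \<times> bool" and p assume p: "p \<in> facepts N f"
  from x p have "((\<lambda>t. x t f p) has_real_derivative x' f p) (at t)"
    by blast
  moreover from y p have "((\<lambda>t. y t f p) has_real_derivative y' f p) (at t)"
    by blast
  ultimately show "((\<lambda>t. x t f p * Hexcept h w (fst f) p * (gam Jm f p * y t f p)) has_real_derivative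
      x' f p * Hexcept h w (fst f) p * (gam Jm f p * y t f p)
      + x t f p * Hexcept h w (fst f) p * (gam Jm f p * y' f p)) (at t)"
    by (auto intro!: derivative_eq_intros simp: algebra_simps)
qed

lemma has_real_derivative_quadratic_form:
  fixes u :: "real \<Rightarrow> ('d::finite \<Rightarrow> nat) \<Rightarrow> real"
  assumes u: "\<forall>p\<in>grid N. ((\<lambda>t. u t p) has_real_derivative u' p) (at t)"
  shows "((\<lambda>t. \<Sum>p\<in>grid N. \<Sum>q\<in>grid N. u t p * M p q * u t q) has_real_derivative
      (\<Sum>p\<in>grid N. \<Sum>q\<in>grid N. u' p * M p q * u t q + u t p * M p q * u' q)) (at t)"
proof (intro DERIV_sum)
  fix p q :: "'d \<Rightarrow> nat" assume "p \<in> grid N" "q \<in> grid N"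
  with u show "((\<lambda>t. u t p * M p q * u t q) has_real_derivative u' p * M p q * u t q + u t p * M p q * u' q) (at t)"
    by (auto intro!: derivative_eq_intros simp: algebra_simps)
qed

locale curvilinear_scheme = sbp_operators N s mb h thetaR w D Dh Dxx R
  for N s mb h thetaR w D Dh Dxx R +
  fixes tauH tauR :: real
    and Jm :: "('d::finite \<Rightarrow> nat) \<Rightarrow> real^'d^'d"
    and a b :: "('d \<Rightarrow> nat) \<Rightarrow> real"
  assumes J_pos: "\<forall>p\<in>grid N. 0 < det (Jm p)"
    and a_pos: "\<forall>p\<in>grid N. 0 < a p"
    and b_pos: "\<forall>p\<in>grid N. 0 < b p"
    and tauH: "tauH \<ge> real CARD('d) / (h * w 0)"
    and tauR: "tauR \<ge> 1 / (h * thetaR)"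
begin

lemma Jm_mult_Kmat:
  assumes "p \<in> grid N"
  shows "Jm p ** Kmat Jm p = mat 1"
proof -
  have "invertible (Jm p)"
    using J_pos assms by (auto simp: invertible_det_nz)
  then have "\<exists>A'. Jm p ** A' = mat 1 \<and> A' ** Jm p = mat 1"
    unfolding invertible_def .
  from someI_ex[OF this] show ?thesis
    unfolding Kmat_def matrix_inv_def by blast
qed

lemma Kmat_column_nonzero: "p \<in> grid N \<Longrightarrow> \<exists>i. Kmat Jm p $ i $ j \<noteq> 0"
proof (rule ccontr)
  assume p: "p \<in> grid N" and "\<not> (\<exists>i. Kmat Jm p $ i $ j \<noteq> 0)"
  then have "(Jm p ** Kmat Jm p) $ j $ j = 0"
    by (simp add: matrix_matrix_mult_def)
  then show False
    using Jm_mult_Kmat[OF p] by (simp add: mat_def)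
qed

lemma gam_pos: "p \<in> grid N \<Longrightarrow> gam Jm f p > 0"
proof -
  assume p: "p \<in> grid N"
  obtain i where i: "Kmat Jm p $ i $ fst f \<noteq> 0"
    using Kmat_column_nonzero[OF p] by blast
  have "(Kmat Jm p *v nu f) $ i = (if snd f then 1 else -1) * Kmat Jm p $ i $ fst f"
    by (simp add: matrix_vector_mult_def nu_nth if_distrib cong: if_cong)
  with i have "Kmat Jm p *v nu f \<noteq> 0"
    by (auto split: if_splits)
  then show ?thesis
    unfolding gam_def Jdet_def using J_pos p by simp
qed

lemma eta_pos: "p \<in> grid N \<Longrightarrow> eta Jm b k p > 0"
proof -
  assume p: "p \<in> grid N"
  obtain i where "Kmat Jm p $ i $ k \<noteq> 0"
    using Kmat_column_nonzero[OF p] by blast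
  then have "(\<Sum>i\<in>UNIV. (Kmat Jm p $ i $ k)\<^sup>2) > 0"
    by (intro sum_pos2[of UNIV i]) auto
  then show ?thesis
    unfolding eta_eq_sum_Kmat_sq using J_pos b_pos p by (simp add: Jdet_def)
qed

lemma b_mv_Dn_mult_gam:
  assumes p: "p \<in> grid N"
  shows "b p * mv N (Dn D Dh Jm f) u p * gam Jm f p
       = (if snd f then 1 else -1)
         * ((\<Sum>k\<in>UNIV. metric_coef Jm b (fst f) k p * mv N (kron k D) u p)
            - eta Jm b (fst f) p * (mv N (kron (fst f) D) u p - mv N (kron (fst f) Dh) u p))"
proof -
  let ?g = "gam Jm f p" and ?s = "(if snd f then 1 else -1) :: real" and ?j = "fst f"
  have g: "?g \<noteq> 0"
    using gam_pos[OF p, of f] by simp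
  have "mv N (Dn D Dh Jm f) u p
      = (\<Sum>j\<in>UNIV. \<Sum>i\<in>UNIV. \<Sum>k\<in>UNIV. nu f $ j * alpha Jm p i j i k * mv N (kron k D) u p / ?g)
        - (\<Sum>k\<in>UNIV. nu f $ k * (\<Sum>i\<in>UNIV. alpha Jm p i k i k)
                        * mv N (kron k (\<lambda>x y. D x y - Dh x y)) u p / ?g)"
    unfolding Dn_def by (simp only: mv_diff mv_sum mv_cmult) (simp add: times_divide_eq_left)
  also have "\<dots> = (\<Sum>i\<in>UNIV. \<Sum>k\<in>UNIV. ?s * alpha Jm p i ?j i k * mv N (kron k D) u p / ?g)
        - ?s * (\<Sum>i\<in>UNIV. alpha Jm p i ?j i ?j) * mv N (kron ?j (\<lambda>x y. D x y - Dh x y)) u p / ?g"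
    by (subst (1 2) sum_UNIV_single[where a = ?j]) (simp_all add: nu_nth)
  also have "\<dots> = ?s / ?g * ((\<Sum>k\<in>UNIV. \<Sum>i\<in>UNIV. alpha Jm p i ?j i k * mv N (kron k D) u p)
        - (\<Sum>i\<in>UNIV. alpha Jm p i ?j i ?j) * mv N (kron ?j (\<lambda>x y. D x y - Dh x y)) u p)"
    by (subst (2) sum.swap)
       (simp add: sum_distrib_left sum_distrib_right sum_divide_distrib algebra_simps)
  finally have Dn: "mv N (Dn D Dh Jm f) u p = ?s / ?g * ((\<Sum>k\<in>UNIV. \<Sum>i\<in>UNIV. alpha Jm p i ?j i k * mv N (kron k D) u p)
        - (\<Sum>i\<in>UNIV. alpha Jm p i ?j i ?j) * mv N (kron ?j (\<lambda>x y. D x y - Dh x y)) u p)" .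
  show ?thesis
    unfolding Dn mv_kron_diff metric_coef_def eta_def using g
    by (simp add: sum_distrib_left sum_distrib_right algebra_simps)
qed

lemma Apen_mult_gam:
  assumes p: "p \<in> grid N"
  shows "Apen N mb Jm b tauH tauR f p * gam Jm f p
       = tauH * eta Jm b (fst f) p + tauR * (eta Jm b (fst f) p)\<^sup>2 / etamin N mb Jm b f (fst f) p"
proof -
  have "gam Jm f p \<noteq> 0"
    using gam_pos[OF p, of f] by simp
  moreover have "(\<Sum>k\<in>UNIV. \<bar>nu f $ k\<bar> * (tauH * eta Jm b k p + tauR * (eta Jm b k p)\<^sup>2 / etamin N mb Jm b f k p))
      = tauH * eta Jm b (fst f) p + tauR * (eta Jm b (fst f) p)\<^sup>2 / etamin N mb Jm b f (fst f) p"
    by (subst sum_UNIV_single[where a = "fst f"]) (simp_all add: nu_nth)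
  ultimately show ?thesis
    unfolding Apen_def by simp
qed

section \<open>The energy identity\<close>

lemma sum_SAT:
  fixes u v :: "('d \<Rightarrow> nat) \<Rightarrow> real"
  shows "(\<Sum>r\<in>grid N. v r * Hfull h w r * SAT N h w D Dh mb Jm b tauH tauR u r)
       = ip_bdry N h w Jm (\<lambda>f p. b p * mv N (Dn D Dh Jm f) v p) (\<lambda>f p. u p)
         - ip_bdry N h w Jm (\<lambda>f p. Apen N mb Jm b tauH tauR f p * u p) (\<lambda>f p. v p)"
proof -
  let ?A = "Apen N mb Jm b tauH tauR"
  define X where "X r = (\<Sum>f\<in>UNIV. \<Sum>q\<in>facepts N f.
      Dn D Dh Jm f q r * (b q * gam Jm f q * Hexcept h w (fst f) q * u q))" for r
  define Y where "Y r = (\<Sum>f\<in>UNIV. if r \<in> facepts N f then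
      ?A f r * gam Jm f r * Hexcept h w (fst f) r * u r else 0)" for r
  have "v r * Hfull h w r * SAT N h w D Dh mb Jm b tauH tauR u r = v r * X r - v r * Y r"
    if "r \<in> grid N" for r
  proof -
    have "SAT N h w D Dh mb Jm b tauH tauR u r = X r / Hfull h w r - Y r / Hfull h w r"
      unfolding SAT_def X_def Y_def by (simp add: mult_ac cong: if_cong)
    moreover have "Hfull h w r \<noteq> 0"
      using Hfull_pos[OF that] by simp
    ultimately have "Hfull h w r * SAT N h w D Dh mb Jm b tauH tauR u r = X r - Y r"
      by (simp add: field_simps)
    then show ?thesis
      by (simp add: mult.assoc right_diff_distrib)
  qed
  then have "(\<Sum>r\<in>grid N. v r * Hfull h w r * SAT N h w D Dh mb Jm b tauH tauR u r)
      = (\<Sum>r\<in>grid N. v r * X r) - (\<Sum>r\<in>grid N. v r * Y r)"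
    by (simp add: sum_subtractf)
  also have "(\<Sum>r\<in>grid N. v r * X r) = ip_bdry N h w Jm (\<lambda>f p. b p * mv N (Dn D Dh Jm f) v p) (\<lambda>f p. u p)"
    unfolding X_def sum_grid_facepts_swap ip_bdry_def by (simp add: mult_ac)
  also have "(\<Sum>r\<in>grid N. v r * Y r) = (\<Sum>r\<in>grid N. \<Sum>f\<in>UNIV. if r \<in> facepts N f then
      v r * (?A f r * gam Jm f r * Hexcept h w (fst f) r * u r) else 0)"
    unfolding Y_def sum_distrib_left by (intro sum.cong refl) simp
  also have "\<dots> = ip_bdry N h w Jm (\<lambda>f p. ?A f p * u p) (\<lambda>f p. v p)"
    unfolding sum_grid_if_facepts ip_bdry_def by (simp add: mult_ac)
  finally show ?thesis .
qed

lemma sum_ip_vol_Dx: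
  fixes u v :: "('d \<Rightarrow> nat) \<Rightarrow> real"
  shows "(\<Sum>i\<in>UNIV. ip_vol N h w Jm (\<lambda>p. sqrt (b p) * Dx N D Jm i v p) (\<lambda>p. sqrt (b p) * Dx N D Jm i u p))
       = (\<Sum>j\<in>UNIV. \<Sum>k\<in>UNIV. \<Sum>z\<in>grid N.
            Hfull h w z * metric_coef Jm b j k z * mv N (kron k D) u z * mv N (kron j D) v z)"
proof -
  have "(\<Sum>i\<in>UNIV. ip_vol N h w Jm (\<lambda>p. sqrt (b p) * Dx N D Jm i v p) (\<lambda>p. sqrt (b p) * Dx N D Jm i u p))
      = (\<Sum>i\<in>UNIV. \<Sum>z\<in>grid N. Hfull h w z * Jdet Jm z * b z * (Dx N D Jm i v z * Dx N D Jm i u z))"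
    using b_pos by (simp add: ip_vol_sqrt_weight less_imp_le)
  also have "\<dots> = (\<Sum>z\<in>grid N. \<Sum>i\<in>UNIV. Hfull h w z * Jdet Jm z * b z * (Dx N D Jm i v z * Dx N D Jm i u z))"
    by (rule sum.swap)
  also have "\<dots> = (\<Sum>z\<in>grid N. \<Sum>j\<in>UNIV. \<Sum>k\<in>UNIV.
      Hfull h w z * metric_coef Jm b j k z * mv N (kron k D) u z * mv N (kron j D) v z)"
  proof (rule sum.cong[OF refl])
    fix z :: "'d \<Rightarrow> nat"
    let ?K = "\<lambda>i j. Kmat Jm z $ i $ j" and ?c = "Hfull h w z * Jdet Jm z * b z"
    have "(\<Sum>i\<in>UNIV. ?c * (Dx N D Jm i v z * Dx N D Jm i u z))
        = (\<Sum>i\<in>UNIV. \<Sum>j\<in>UNIV. \<Sum>k\<in>UNIV.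
             ?c * (?K i j * mv N (kron j D) v z * (?K i k * mv N (kron k D) u z)))"
      unfolding Dx_def sum_product by (simp add: sum_distrib_left)
    also have "\<dots> = (\<Sum>j\<in>UNIV. \<Sum>k\<in>UNIV. \<Sum>i\<in>UNIV.
             ?c * (?K i j * mv N (kron j D) v z * (?K i k * mv N (kron k D) u z)))"
      by (subst sum.swap) (rule sum.cong[OF refl], rule sum.swap)
    also have "\<dots> = (\<Sum>j\<in>UNIV. \<Sum>k\<in>UNIV.
        Hfull h w z * metric_coef Jm b j k z * mv N (kron k D) u z * mv N (kron j D) v z)"
      unfolding metric_coef_def alpha_def by (simp add: sum_distrib_left sum_distrib_right mult_ac)
    finally show "(\<Sum>i\<in>UNIV. ?c * (Dx N D Jm i v z * Dx N D Jm i u z)) = \<dots>" .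
  qed
  also have "\<dots> = (\<Sum>j\<in>UNIV. \<Sum>k\<in>UNIV. \<Sum>z\<in>grid N.
      Hfull h w z * metric_coef Jm b j k z * mv N (kron k D) u z * mv N (kron j D) v z)"
    by (subst sum.swap) (rule sum.cong[OF refl], rule sum.swap)
  finally show ?thesis .
qed

lemma ip_bdry_Dn:
  fixes u v :: "('d \<Rightarrow> nat) \<Rightarrow> real"
  shows "ip_bdry N h w Jm (\<lambda>f p. b p * mv N (Dn D Dh Jm f) u p) (\<lambda>f p. v p)
       = (\<Sum>j\<in>UNIV. \<Sum>k\<in>UNIV. \<Sum>z\<in>grid N.
            bdry_weight N h w j z * v z * metric_coef Jm b j k z * mv N (kron k D) u z)
         - (\<Sum>j\<in>UNIV. \<Sum>z\<in>grid N.
            bdry_weight N h w j z * v z * eta Jm b j z * (mv N (kron j D) u z - mv N (kron j Dh) u z))"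
proof -
  define S where "S j z = (\<Sum>k\<in>UNIV. metric_coef Jm b j k z * mv N (kron k D) u z)
      - eta Jm b j z * (mv N (kron j D) u z - mv N (kron j Dh) u z)" for j z
  have "ip_bdry N h w Jm (\<lambda>f p. b p * mv N (Dn D Dh Jm f) u p) (\<lambda>f p. v p)
      = (\<Sum>f\<in>UNIV. \<Sum>p\<in>facepts N f. Hexcept h w (fst f) p * v p * ((if snd f then 1 else -1) * S (fst f) p))"
    unfolding ip_bdry_def
  proof (intro sum.cong refl)
    fix f and p :: "'d \<Rightarrow> nat" assume "p \<in> facepts N f"
    then have "p \<in> grid N"
      by (rule facepts_subset_grid)
    then show "b p * mv N (Dn D Dh Jm f) u p * Hexcept h w (fst f) p * (gam Jm f p * v p)
        = Hexcept h w (fst f) p * v p * ((if snd f then 1 else -1) * S (fst f) p)"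
      using b_mv_Dn_mult_gam[of p f u] unfolding S_def by (simp add: mult_ac)
  qed
  also have "\<dots> = (\<Sum>j\<in>UNIV. \<Sum>p\<in>grid N. bdry_weight N h w j p * v p * S j p)"
    unfolding sum_faces bdry_weight_def by (intro sum.cong refl) (simp add: algebra_simps)
  also have "\<dots> = (\<Sum>j\<in>UNIV. \<Sum>z\<in>grid N. \<Sum>k\<in>UNIV.
            bdry_weight N h w j z * v z * metric_coef Jm b j k z * mv N (kron k D) u z)
         - (\<Sum>j\<in>UNIV. \<Sum>z\<in>grid N.
            bdry_weight N h w j z * v z * eta Jm b j z * (mv N (kron j D) u z - mv N (kron j Dh) u z))"
    unfolding S_def sum_subtractf[symmetric] by (intro sum.cong refl) (simp add: sum_distrib_left algebra_simps)
  also have "(\<Sum>j\<in>UNIV. \<Sum>z\<in>grid N. \<Sum>k\<in>UNIV.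
            bdry_weight N h w j z * v z * metric_coef Jm b j k z * mv N (kron k D) u z)
      = (\<Sum>j\<in>UNIV. \<Sum>k\<in>UNIV. \<Sum>z\<in>grid N.
            bdry_weight N h w j z * v z * metric_coef Jm b j k z * mv N (kron k D) u z)"
    by (rule sum.cong[OF refl], rule sum.swap)
  finally show ?thesis .
qed

definition energy_form :: "(('d \<Rightarrow> nat) \<Rightarrow> real) \<Rightarrow> (('d \<Rightarrow> nat) \<Rightarrow> real) \<Rightarrow> real" where
  "energy_form u v =
     (\<Sum>i\<in>UNIV. ip_vol N h w Jm (\<lambda>p. sqrt (b p) * Dx N D Jm i u p) (\<lambda>p. sqrt (b p) * Dx N D Jm i v p))
   + (\<Sum>k\<in>UNIV. \<Sum>p\<in>grid N. \<Sum>q\<in>grid N. u p * Rii N h w R k (eta Jm b k) p q * v q)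
   - ip_bdry N h w Jm (\<lambda>f p. b p * mv N (Dn D Dh Jm f) u p) (\<lambda>f p. v p)
   - ip_bdry N h w Jm (\<lambda>f p. b p * mv N (Dn D Dh Jm f) v p) (\<lambda>f p. u p)
   + ip_bdry N h w Jm (\<lambda>f p. Apen N mb Jm b tauH tauR f p * u p) (\<lambda>f p. v p)"

lemma sum_rhs:
  "(\<Sum>r\<in>grid N. v r * Hfull h w r * rhs N h w D Dh Dxx mb Jm b tauH tauR u r)
   = (\<Sum>j\<in>UNIV. \<Sum>k\<in>UNIV. \<Sum>r\<in>grid N. v r * Hfull h w r * mv N (DD N D Dxx j k (metric_coef Jm b j k)) u r)
     + (\<Sum>r\<in>grid N. v r * Hfull h w r * SAT N h w D Dh mb Jm b tauH tauR u r)"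
proof -
  have "(\<lambda>q. \<Sum>i\<in>UNIV. alpha Jm q i j i k * b q) = metric_coef Jm b j k" for j k
    by (simp add: fun_eq_iff metric_coef_def)
  then have "(\<Sum>r\<in>grid N. v r * Hfull h w r * rhs N h w D Dh Dxx mb Jm b tauH tauR u r)
      = (\<Sum>r\<in>grid N. \<Sum>j\<in>UNIV. \<Sum>k\<in>UNIV. v r * Hfull h w r * mv N (DD N D Dxx j k (metric_coef Jm b j k)) u r)
        + (\<Sum>r\<in>grid N. v r * Hfull h w r * SAT N h w D Dh mb Jm b tauH tauR u r)"
    unfolding rhs_def by (simp add: sum.distrib sum_distrib_left algebra_simps)
  also have "(\<Sum>r\<in>grid N. \<Sum>j\<in>UNIV. \<Sum>k\<in>UNIV. v r * Hfull h w r * mv N (DD N D Dxx j k (metric_coef Jm b j k)) u r)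
      = (\<Sum>j\<in>UNIV. \<Sum>k\<in>UNIV. \<Sum>r\<in>grid N. v r * Hfull h w r * mv N (DD N D Dxx j k (metric_coef Jm b j k)) u r)"
    by (subst sum.swap) (rule sum.cong[OF refl], rule sum.swap)
  finally show ?thesis .
qed

lemma sum_rhs_add_energy_form_eq_0:
  fixes u v :: "('d \<Rightarrow> nat) \<Rightarrow> real"
  shows "(\<Sum>r\<in>grid N. v r * Hfull h w r * rhs N h w D Dh Dxx mb Jm b tauH tauR u r) + energy_form v u = 0"
proof -
  define vol where "vol j k = (\<Sum>z\<in>grid N.
      Hfull h w z * metric_coef Jm b j k z * mv N (kron k D) u z * mv N (kron j D) v z)" for j k
  define bdry where "bdry j k = (\<Sum>z\<in>grid N.
      bdry_weight N h w j z * v z * metric_coef Jm b j k z * mv N (kron k D) u z)" for j k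
  define corr where "corr j = (\<Sum>z\<in>grid N.
      bdry_weight N h w j z * v z * eta Jm b j z * (mv N (kron j D) u z - mv N (kron j Dh) u z))" for j
  define Rq where "Rq j = (\<Sum>r\<in>grid N. \<Sum>q\<in>grid N. v r * Rii N h w R j (eta Jm b j) r q * u q)" for j
  have DD: "(\<Sum>r\<in>grid N. v r * Hfull h w r * mv N (DD N D Dxx j k (metric_coef Jm b j k)) u r)
      = - vol j k + bdry j k - (if j = k then corr j + Rq j else 0)" for j k
    by (cases "j = k") (simp_all add: sum_mv_DD vol_def bdry_def corr_def Rq_def eta_eq_metric_coef)
  have "(\<Sum>r\<in>grid N. v r * Hfull h w r * rhs N h w D Dh Dxx mb Jm b tauH tauR u r)
      = - (\<Sum>j\<in>UNIV. \<Sum>k\<in>UNIV. vol j k) + (\<Sum>j\<in>UNIV. \<Sum>k\<in>UNIV. bdry j k)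
        - (\<Sum>j\<in>UNIV. corr j + Rq j)
        + ip_bdry N h w Jm (\<lambda>f p. b p * mv N (Dn D Dh Jm f) v p) (\<lambda>f p. u p)
        - ip_bdry N h w Jm (\<lambda>f p. Apen N mb Jm b tauH tauR f p * u p) (\<lambda>f p. v p)"
    unfolding sum_rhs DD sum_SAT by (simp add: sum.distrib sum_subtractf sum_negf)
  moreover have "energy_form v u
      = (\<Sum>j\<in>UNIV. \<Sum>k\<in>UNIV. vol j k) + (\<Sum>j\<in>UNIV. Rq j)
        - ip_bdry N h w Jm (\<lambda>f p. b p * mv N (Dn D Dh Jm f) v p) (\<lambda>f p. u p)
        - ((\<Sum>j\<in>UNIV. \<Sum>k\<in>UNIV. bdry j k) - (\<Sum>j\<in>UNIV. corr j))
        + ip_bdry N h w Jm (\<lambda>f p. Apen N mb Jm b tauH tauR f p * u p) (\<lambda>f p. v p)"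
    unfolding energy_form_def sum_ip_vol_Dx ip_bdry_Dn ip_bdry_commute[where x = v and y = u]
    by (simp add: vol_def bdry_def corr_def Rq_def)
  ultimately show ?thesis
    by (simp add: sum.distrib)
qed

section \<open>Nonnegativity of the energy\<close>

lemma etamin_pos: "p \<in> grid N \<Longrightarrow> etamin N mb Jm b f k p > 0"
proof -
  assume p: "p \<in> grid N"
  have "side_idx N mb f \<noteq> {}" and "finite (side_idx N mb f)"
    using N_mb mb_pos by (auto simp: side_idx_def lessThan_empty_iff)
  moreover have "\<forall>m\<in>side_idx N mb f. m < N"
    using N_mb by (auto simp: side_idx_def)
  then have "\<forall>x\<in>(\<lambda>m. eta Jm b k (p(k := m))) ` side_idx N mb f. x > 0"
    using eta_pos fun_upd_in_grid[OF p] by auto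
  ultimately show ?thesis
    unfolding etamin_def by (simp add: Min_gr_iff)
qed

lemma Hfull_face: "p \<in> facepts N f \<Longrightarrow> Hfull h w p = h * w 0 * Hexcept h w (fst f) p"
  unfolding facepts_def using w_last by (auto simp: Hfull_eq_Hexcept[of h w p "fst f"] split: if_splits)

lemma face_term_eq:
  fixes u :: "('d \<Rightarrow> nat) \<Rightarrow> real" and f :: "'d \<times> bool"
  assumes p: "p \<in> grid N"
  defines "sg \<equiv> (if snd f then 1 else -1 :: real)"
    and "dl \<equiv> mv N (kron (fst f) D) u p - mv N (kron (fst f) Dh) u p"
  shows "- (b p * mv N (Dn D Dh Jm f) u p * Hexcept h w (fst f) p * (gam Jm f p * u p))
         + 1/2 * (Apen N mb Jm b tauH tauR f p * u p * Hexcept h w (fst f) p * (gam Jm f p * u p))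
       = Hexcept h w (fst f) p
         * (- sg * (Jdet Jm p * b p) * (\<Sum>i\<in>UNIV. Kmat Jm p $ i $ fst f * Dx N D Jm i u p) * u p
            + 1/2 * tauH * eta Jm b (fst f) p * (u p)\<^sup>2
            + (sg * eta Jm b (fst f) p * dl * u p
               + 1/2 * (tauR * (eta Jm b (fst f) p)\<^sup>2 / etamin N mb Jm b f (fst f) p) * (u p)\<^sup>2))"
proof -
  have "- (b p * mv N (Dn D Dh Jm f) u p * Hexcept h w (fst f) p * (gam Jm f p * u p))
        + 1/2 * (Apen N mb Jm b tauH tauR f p * u p * Hexcept h w (fst f) p * (gam Jm f p * u p))
      = Hexcept h w (fst f) p * (- (b p * mv N (Dn D Dh Jm f) u p * gam Jm f p) * u p
        + 1/2 * (Apen N mb Jm b tauH tauR f p * gam Jm f p) * (u p)\<^sup>2)"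
    by (simp add: algebra_simps power2_eq_square)
  then show ?thesis
    unfolding b_mv_Dn_mult_gam[OF p] Apen_mult_gam[OF p] metric_coef_Dx sg_def dl_def
    by (simp add: algebra_simps)
qed

lemma tauH_absorbs_cross_term:
  assumes p: "p \<in> grid N" and sg: "sg\<^sup>2 = 1"
  shows "sg * (Jdet Jm p * b p) * (\<Sum>i\<in>UNIV. Kmat Jm p $ i $ k * Dx N D Jm i u p) * z
       \<le> tauH / 2 * eta Jm b k p * z\<^sup>2
         + h * w 0 / (2 * real CARD('d)) * (Jdet Jm p * b p) * (\<Sum>i\<in>UNIV. (Dx N D Jm i u p)\<^sup>2)"
proof -
  define e where "e = h * w 0 / real CARD('d)"
  have w0: "0 < w 0"
    using w_pos N_ge_2 by simp
  have e: "0 < e"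
    unfolding e_def using h_pos w0 by simp
  have "real CARD('d) / (h * w 0) * e = 1"
    unfolding e_def using h_pos w0 by simp
  then have te: "1 \<le> tauH * e"
    using mult_right_mono[OF tauH, of e] e by linarith
  have Jb: "0 \<le> Jdet Jm p * b p"
    unfolding Jdet_def using J_pos b_pos p by (simp add: less_imp_le)
  from sum_cross_term_le[where x = "\<lambda>i. Kmat Jm p $ i $ k" and y = "\<lambda>i. Dx N D Jm i u p"
      and A = UNIV and z = z, OF sg e te Jb]
  show ?thesis
    unfolding eta_eq_sum_Kmat_sq e_def by (simp add: algebra_simps)
qed

lemma tauR_absorbs_correction:
  assumes p: "p \<in> grid N" and sg: "sg\<^sup>2 = 1"
  shows "sg * eta Jm b k p * x * z
       \<le> h * thetaR * etamin N mb Jm b f k p / 2 * x\<^sup>2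
         + tauR * (eta Jm b k p)\<^sup>2 / etamin N mb Jm b f k p / 2 * z\<^sup>2"
proof -
  let ?et = "eta Jm b k p" and ?em = "etamin N mb Jm b f k p"
  have em: "0 < ?em"
    using etamin_pos[OF p] .
  have "(?et * z)\<^sup>2 / (2 * (h * thetaR * ?em)) = 1 / (h * thetaR) * (?et\<^sup>2 * z\<^sup>2 / (2 * ?em))"
    by (simp add: power_mult_distrib)
  also have "\<dots> \<le> tauR * (?et\<^sup>2 * z\<^sup>2 / (2 * ?em))"
    using tauR em by (intro mult_right_mono) auto
  finally have "(?et * z)\<^sup>2 / (2 * (h * thetaR * ?em)) \<le> tauR * ?et\<^sup>2 / ?em / 2 * z\<^sup>2"
    by simp
  moreover have "0 < h * thetaR * ?em"
    using h_pos thetaR_pos em by simp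
  from young_signed[OF sg this, of x "?et * z"]
  have "sg * x * (?et * z) \<le> h * thetaR * ?em / 2 * x\<^sup>2 + (?et * z)\<^sup>2 / (2 * (h * thetaR * ?em))" .
  ultimately show ?thesis
    by (simp add: mult_ac)
qed

lemma face_term_lower_bound:
  assumes pf: "p \<in> facepts N f"
  shows "- (Hfull h w p * (Jdet Jm p * b p * (\<Sum>i\<in>UNIV. (Dx N D Jm i u p)\<^sup>2)) / (2 * real CARD('d)))
         - Hexcept h w (fst f) p * (h * thetaR / 2) * etamin N mb Jm b f (fst f) p
             * (mv N (kron (fst f) D) u p - mv N (kron (fst f) Dh) u p)\<^sup>2
       \<le> - (b p * mv N (Dn D Dh Jm f) u p * Hexcept h w (fst f) p * (gam Jm f p * u p))
         + 1/2 * (Apen N mb Jm b tauH tauR f p * u p * Hexcept h w (fst f) p * (gam Jm f p * u p))"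
proof -
  have p: "p \<in> grid N"
    using pf by (rule facepts_subset_grid)
  define sg :: real where "sg = (if snd f then 1 else -1)"
  define dl where "dl = mv N (kron (fst f) D) u p - mv N (kron (fst f) Dh) u p"
  have "sg\<^sup>2 = 1" and "(- sg)\<^sup>2 = 1"
    by (simp_all add: sg_def)
  note vol = tauH_absorbs_cross_term[where k = "fst f" and u = u and z = "u p", OF p this(1)]
    and corr = tauR_absorbs_correction[where k = "fst f" and f = f and x = dl and z = "u p", OF p this(2)]
  have "- (Hfull h w p * (Jdet Jm p * b p * (\<Sum>i\<in>UNIV. (Dx N D Jm i u p)\<^sup>2)) / (2 * real CARD('d)))
         - Hexcept h w (fst f) p * (h * thetaR / 2) * etamin N mb Jm b f (fst f) p * dl\<^sup>2
      = Hexcept h w (fst f) p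
        * (- (h * w 0 / (2 * real CARD('d)) * (Jdet Jm p * b p) * (\<Sum>i\<in>UNIV. (Dx N D Jm i u p)\<^sup>2))
           - h * thetaR * etamin N mb Jm b f (fst f) p / 2 * dl\<^sup>2)"
    unfolding Hfull_face[OF pf] by (simp add: algebra_simps)
  also have "\<dots> \<le> Hexcept h w (fst f) p
         * (- sg * (Jdet Jm p * b p) * (\<Sum>i\<in>UNIV. Kmat Jm p $ i $ fst f * Dx N D Jm i u p) * u p
            + 1/2 * tauH * eta Jm b (fst f) p * (u p)\<^sup>2
            + (sg * eta Jm b (fst f) p * dl * u p
               + 1/2 * (tauR * (eta Jm b (fst f) p)\<^sup>2 / etamin N mb Jm b f (fst f) p) * (u p)\<^sup>2))"
    using vol corr Hexcept_pos[OF p, of "fst f"] by (intro mult_left_mono) auto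
  finally show ?thesis
    unfolding face_term_eq[OF p] sg_def dl_def .
qed

lemma sum_line_Rii_eta_lower_bound:
  assumes p0: "p0 \<in> grid N" and p0j: "p0 j = 0"
  shows "Hexcept h w j p0 * (h * thetaR)
           * (etamin N mb Jm b (j, False) j p0 * (mv N (kron j D) u p0 - mv N (kron j Dh) u p0)\<^sup>2
              + etamin N mb Jm b (j, True) j (p0(j := N - 1))
                * (mv N (kron j D) u (p0(j := N - 1)) - mv N (kron j Dh) u (p0(j := N - 1)))\<^sup>2)
       \<le> (\<Sum>m<N. \<Sum>q\<in>grid N. u (p0(j := m)) * Rii N h w R j (eta Jm b j) (p0(j := m)) q * u q)"
proof -
  let ?c = "line_restrict N j p0 (eta Jm b j)" and ?x = "\<lambda>m. u (p0(j := m))"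
  have c_val: "?c k = eta Jm b j (p0(j := k))" if "k < N" for k
    using that by (simp add: line_restrict_def)
  have "line_restrict N j (p0(j := m)) (eta Jm b j) = ?c" for m
    by (simp add: fun_eq_iff line_restrict_def)
  then have "(\<Sum>m<N. \<Sum>q\<in>grid N. u (p0(j := m)) * Rii N h w R j (eta Jm b j) (p0(j := m)) q * u q)
      = (\<Sum>m<N. ?x m * (Hexcept h w j p0 * (\<Sum>m'<N. R ?c m m' * ?x m')))"
    by (intro sum.cong refl)
       (simp add: sum_distrib_left[symmetric] mult.assoc sum_Rii_mult[OF fun_upd_in_grid[OF p0]])
  also have "\<dots> = Hexcept h w j p0 * (\<Sum>m<N. \<Sum>m'<N. ?x m * R ?c m m' * ?x m')"
    by (simp add: sum_distrib_left mult_ac)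
  finally have quad: "(\<Sum>m<N. \<Sum>q\<in>grid N. u (p0(j := m)) * Rii N h w R j (eta Jm b j) (p0(j := m)) q * u q)
      = Hexcept h w j p0 * (\<Sum>m<N. \<Sum>m'<N. ?x m * R ?c m m' * ?x m')" .
  have last: "p0(j := N - 1) \<in> grid N"
    using N_ge_2 by (intro fun_upd_in_grid[OF p0]) simp
  have "\<forall>k<N. 0 \<le> ?c k"
    using c_val eta_pos fun_upd_in_grid[OF p0] by (simp add: less_imp_le)
  note PR_line = R_lower_bound[OF this, of ?x]
  have "etamin N mb Jm b (j, False) j p0 = Min (?c ` {..<mb})"
    unfolding etamin_def side_idx_def using N_mb mb_pos
    by (simp, intro arg_cong[where f = Min] image_cong refl) (simp add: c_val)
  moreover have "etamin N mb Jm b (j, True) j (p0(j := N - 1)) = Min (?c ` {N - mb..<N})"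
    unfolding etamin_def side_idx_def
    by (simp, intro arg_cong[where f = Min] image_cong refl) (simp add: c_val)
  moreover have "mv N (kron j D) u p0 - mv N (kron j Dh) u p0 = (\<Sum>m<N. (D 0 m - Dh 0 m) * ?x m)"
    unfolding mv_kron[OF p0] p0j by (simp add: sum_subtractf algebra_simps)
  moreover have "mv N (kron j D) u (p0(j := N - 1)) - mv N (kron j Dh) u (p0(j := N - 1))
      = (\<Sum>m<N. (D (N - 1) m - Dh (N - 1) m) * ?x m)"
    unfolding mv_kron[OF last] by (simp add: sum_subtractf algebra_simps)
  ultimately show ?thesis
    unfolding quad using mult_left_mono[OF PR_line less_imp_le[OF Hexcept_pos[OF p0]]]
    by (simp add: algebra_simps)
qed

lemma Rii_eta_lower_bound:
  "h * thetaR * (\<Sum>p\<in>grid N.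
       (if p j = N - 1 then Hexcept h w j p * etamin N mb Jm b (j, True) j p
                            * (mv N (kron j D) u p - mv N (kron j Dh) u p)\<^sup>2 else 0)
     + (if p j = 0 then Hexcept h w j p * etamin N mb Jm b (j, False) j p
                        * (mv N (kron j D) u p - mv N (kron j Dh) u p)\<^sup>2 else 0))
   \<le> (\<Sum>p\<in>grid N. \<Sum>q\<in>grid N. u p * Rii N h w R j (eta Jm b j) p q * u q)"
proof -
  have N: "0 < N"
    using N_ge_2 by simp
  define dl where "dl p = mv N (kron j D) u p - mv N (kron j Dh) u p" for p
  define X where "X p = Hexcept h w j p * etamin N mb Jm b (j, True) j p * (dl p)\<^sup>2" for p
  define Y where "Y p = Hexcept h w j p * etamin N mb Jm b (j, False) j p * (dl p)\<^sup>2" for p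
  have "(\<Sum>p\<in>grid N. (if p j = N - 1 then X p else 0) + (if p j = 0 then Y p else 0))
      = (\<Sum>p0\<in>{p \<in> grid N. p j = 0}. X (p0(j := N - 1)) + Y p0)"
  proof -
    have "(\<Sum>m<N. (if m = N - 1 then X (p0(j := m)) else 0) + (if m = 0 then Y (p0(j := m)) else 0))
        = X (p0(j := N - 1)) + Y p0" if "p0 j = 0" for p0
    proof -
      have "p0(j := 0) = p0"
        using that by auto
      then show ?thesis
        using N by (simp add: sum.distrib)
    qed
    then show ?thesis
      by (subst sum_grid_by_lines[OF N, of _ j]) simp
  qed
  then have "h * thetaR * (\<Sum>p\<in>grid N. (if p j = N - 1 then X p else 0) + (if p j = 0 then Y p else 0))
      = (\<Sum>p0\<in>{p \<in> grid N. p j = 0}. Hexcept h w j p0 * (h * thetaR)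
          * (etamin N mb Jm b (j, False) j p0 * (dl p0)\<^sup>2
             + etamin N mb Jm b (j, True) j (p0(j := N - 1)) * (dl (p0(j := N - 1)))\<^sup>2))"
    unfolding X_def Y_def by (simp add: sum_distrib_left algebra_simps)
  also have "\<dots> \<le> (\<Sum>p0\<in>{p \<in> grid N. p j = 0}.
      \<Sum>m<N. \<Sum>q\<in>grid N. u (p0(j := m)) * Rii N h w R j (eta Jm b j) (p0(j := m)) q * u q)"
    unfolding dl_def by (intro sum_mono sum_line_Rii_eta_lower_bound) auto
  also have "\<dots> = (\<Sum>p\<in>grid N. \<Sum>q\<in>grid N. u p * Rii N h w R j (eta Jm b j) p q * u q)"
    by (rule sum_grid_by_lines[OF N, symmetric])
  finally show ?thesis
    unfolding X_def Y_def dl_def .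
qed

lemma sum_faces_le:
  fixes G :: "('d \<Rightarrow> nat) \<Rightarrow> real"
  assumes "\<And>p. p \<in> grid N \<Longrightarrow> G p \<ge> 0"
  shows "(\<Sum>f\<in>UNIV. \<Sum>p\<in>facepts N f. G p) \<le> real CARD('d) * (\<Sum>p\<in>grid N. G p)"
proof -
  have "(\<Sum>f\<in>UNIV. \<Sum>p\<in>facepts N f. G p)
      = (\<Sum>j\<in>UNIV. \<Sum>p\<in>grid N. (if p j = N - 1 then G p else 0) + (if p j = 0 then G p else 0))"
    by (rule sum_faces)
  also have "\<dots> \<le> (\<Sum>j\<in>(UNIV::'d set). \<Sum>p\<in>grid N. G p)"
    by (intro sum_mono) (use assms N_ge_2 in auto)
  finally show ?thesis
    by simp
qed

lemma sum_faces_volume_le: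
  "(\<Sum>f\<in>UNIV. \<Sum>p\<in>facepts N f.
      Hfull h w p * (Jdet Jm p * b p * (\<Sum>i\<in>UNIV. (Dx N D Jm i u p)\<^sup>2)) / (2 * real CARD('d)))
   \<le> 1/2 * (\<Sum>i\<in>UNIV. ip_vol N h w Jm (\<lambda>p. sqrt (b p) * Dx N D Jm i u p) (\<lambda>p. sqrt (b p) * Dx N D Jm i u p))"
proof -
  let ?W = "\<lambda>p. Hfull h w p * (Jdet Jm p * b p * (\<Sum>i\<in>UNIV. (Dx N D Jm i u p)\<^sup>2))"
  have "(\<Sum>i\<in>UNIV. ip_vol N h w Jm (\<lambda>p. sqrt (b p) * Dx N D Jm i u p) (\<lambda>p. sqrt (b p) * Dx N D Jm i u p))
      = (\<Sum>p\<in>grid N. ?W p)"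
    using b_pos
    by (simp add: ip_vol_sqrt_weight less_imp_le power2_eq_square sum_distrib_left mult_ac
                  sum.swap[of _ UNIV "grid N"])
  moreover have "0 \<le> ?W p / (2 * real CARD('d))" if "p \<in> grid N" for p
    using that Hfull_pos J_pos b_pos unfolding Jdet_def
    by (intro divide_nonneg_pos mult_nonneg_nonneg sum_nonneg) (auto intro: less_imp_le)
  ultimately show ?thesis
    using sum_faces_le[of "\<lambda>p. ?W p / (2 * real CARD('d))"] by (simp add: sum_divide_distrib[symmetric])
qed

lemma sum_faces_correction_le:
  "(\<Sum>f\<in>UNIV. \<Sum>p\<in>facepts N f. Hexcept h w (fst f) p * (h * thetaR / 2) * etamin N mb Jm b f (fst f) p
      * (mv N (kron (fst f) D) u p - mv N (kron (fst f) Dh) u p)\<^sup>2)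
   \<le> 1/2 * (\<Sum>k\<in>UNIV. \<Sum>p\<in>grid N. \<Sum>q\<in>grid N. u p * Rii N h w R k (eta Jm b k) p q * u q)"
proof -
  define dl where "dl j p = mv N (kron j D) u p - mv N (kron j Dh) u p" for j p
  have "(\<Sum>f\<in>UNIV. \<Sum>p\<in>facepts N f. Hexcept h w (fst f) p * (h * thetaR / 2) * etamin N mb Jm b f (fst f) p
          * (dl (fst f) p)\<^sup>2)
      = (\<Sum>j\<in>UNIV. h * thetaR / 2 * (\<Sum>p\<in>grid N.
         (if p j = N - 1 then Hexcept h w j p * etamin N mb Jm b (j, True) j p * (dl j p)\<^sup>2 else 0)
       + (if p j = 0 then Hexcept h w j p * etamin N mb Jm b (j, False) j p * (dl j p)\<^sup>2 else 0)))"
    unfolding sum_faces sum_distrib_left by (intro sum.cong refl) (auto simp: algebra_simps)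
  also have "\<dots> \<le> (\<Sum>j\<in>UNIV. 1/2 * (\<Sum>p\<in>grid N. \<Sum>q\<in>grid N. u p * Rii N h w R j (eta Jm b j) p q * u q))"
    unfolding dl_def using Rii_eta_lower_bound by (intro sum_mono) simp
  finally show ?thesis
    unfolding dl_def by (simp add: sum_distrib_left)
qed

lemma energy_form_nonneg: "0 \<le> energy_form u u"
proof -
  define T where "T f p = - (b p * mv N (Dn D Dh Jm f) u p * Hexcept h w (fst f) p * (gam Jm f p * u p))
      + 1/2 * (Apen N mb Jm b tauH tauR f p * u p * Hexcept h w (fst f) p * (gam Jm f p * u p))" for f p
  have "energy_form u u
      = (\<Sum>i\<in>UNIV. ip_vol N h w Jm (\<lambda>p. sqrt (b p) * Dx N D Jm i u p) (\<lambda>p. sqrt (b p) * Dx N D Jm i u p))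
        + (\<Sum>k\<in>UNIV. \<Sum>p\<in>grid N. \<Sum>q\<in>grid N. u p * Rii N h w R k (eta Jm b k) p q * u q)
        + 2 * (\<Sum>f\<in>UNIV. \<Sum>p\<in>facepts N f. T f p)"
    unfolding energy_form_def T_def ip_bdry_def
    by (simp add: sum.distrib sum_subtractf sum_negf sum_distrib_left algebra_simps)
  moreover have "(\<Sum>f\<in>UNIV. \<Sum>p\<in>facepts N f.
        - (Hfull h w p * (Jdet Jm p * b p * (\<Sum>i\<in>UNIV. (Dx N D Jm i u p)\<^sup>2)) / (2 * real CARD('d)))
        - Hexcept h w (fst f) p * (h * thetaR / 2) * etamin N mb Jm b f (fst f) p
          * (mv N (kron (fst f) D) u p - mv N (kron (fst f) Dh) u p)\<^sup>2)
      \<le> (\<Sum>f\<in>UNIV. \<Sum>p\<in>facepts N f. T f p)"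
    unfolding T_def by (intro sum_mono) (rule face_term_lower_bound)
  ultimately show ?thesis
    using sum_faces_volume_le[of u] sum_faces_correction_le[of u]
    by (simp add: sum_subtractf sum_negf)
qed

section \<open>Conservation of the energy\<close>

lemma energy_form_commute: "energy_form u v = energy_form v u"
proof -
  have "(\<Sum>p\<in>grid N. \<Sum>q\<in>grid N. u p * Rii N h w R k (eta Jm b k) p q * v q)
      = (\<Sum>p\<in>grid N. \<Sum>q\<in>grid N. v p * Rii N h w R k (eta Jm b k) p q * u q)" for k
  proof -
    have "\<forall>x\<in>grid N. 0 \<le> eta Jm b k x"
      using eta_pos less_imp_le by blast
    then have "(\<Sum>p\<in>grid N. \<Sum>q\<in>grid N. u p * Rii N h w R k (eta Jm b k) p q * v q)
        = (\<Sum>p\<in>grid N. \<Sum>q\<in>grid N. v q * Rii N h w R k (eta Jm b k) q p * u p)"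
      by (intro sum.cong refl) (simp add: Rii_sym mult_ac)
    also have "\<dots> = (\<Sum>q\<in>grid N. \<Sum>p\<in>grid N. v q * Rii N h w R k (eta Jm b k) q p * u p)"
      by (rule sum.swap)
    finally show ?thesis .
  qed
  then show ?thesis
    unfolding energy_form_def
    by (simp add: ip_vol_commute[of _ _ _ _ "\<lambda>p. sqrt (b p) * Dx N D Jm _ u p"] ip_bdry_commute[where x = u])
qed

lemma energy_form_has_derivative:
  fixes u :: "real \<Rightarrow> ('d \<Rightarrow> nat) \<Rightarrow> real"
  assumes du: "\<forall>p\<in>grid N. ((\<lambda>t. u t p) has_real_derivative u' p) (at t)"
  shows "((\<lambda>t. energy_form (u t) (u t)) has_real_derivative 2 * energy_form u' (u t)) (at t)"
proof -
  let ?A = "Apen N mb Jm b tauH tauR"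
  have face: "\<forall>f. \<forall>p\<in>facepts N f. ((\<lambda>t. u t p) has_real_derivative u' p) (at t)"
    using du facepts_subset_grid by blast
  have sqrt_Dx: "\<forall>p\<in>grid N. ((\<lambda>t. sqrt (b p) * Dx N D Jm i (u t) p)
      has_real_derivative sqrt (b p) * Dx N D Jm i u' p) (at t)" for i
    using has_real_derivative_Dx[OF du] by (auto intro: DERIV_cmult)
  have vol: "((\<lambda>t. \<Sum>i\<in>UNIV. ip_vol N h w Jm (\<lambda>p. sqrt (b p) * Dx N D Jm i (u t) p)
                                           (\<lambda>p. sqrt (b p) * Dx N D Jm i (u t) p))
      has_real_derivative (\<Sum>i\<in>UNIV.
        ip_vol N h w Jm (\<lambda>p. sqrt (b p) * Dx N D Jm i u' p) (\<lambda>p. sqrt (b p) * Dx N D Jm i (u t) p)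
        + ip_vol N h w Jm (\<lambda>p. sqrt (b p) * Dx N D Jm i (u t) p) (\<lambda>p. sqrt (b p) * Dx N D Jm i u' p))) (at t)"
    by (intro DERIV_sum has_real_derivative_ip_vol sqrt_Dx)
  have Rq: "((\<lambda>t. \<Sum>k\<in>UNIV. \<Sum>p\<in>grid N. \<Sum>q\<in>grid N. u t p * Rii N h w R k (eta Jm b k) p q * u t q)
      has_real_derivative (\<Sum>k\<in>UNIV. \<Sum>p\<in>grid N. \<Sum>q\<in>grid N.
        u' p * Rii N h w R k (eta Jm b k) p q * u t q + u t p * Rii N h w R k (eta Jm b k) p q * u' q)) (at t)"
    by (rule DERIV_sum, rule has_real_derivative_quadratic_form[OF du])
  have Dn: "((\<lambda>t. ip_bdry N h w Jm (\<lambda>f p. b p * mv N (Dn D Dh Jm f) (u t) p) (\<lambda>f p. u t p))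
      has_real_derivative ip_bdry N h w Jm (\<lambda>f p. b p * mv N (Dn D Dh Jm f) u' p) (\<lambda>f p. u t p)
        + ip_bdry N h w Jm (\<lambda>f p. b p * mv N (Dn D Dh Jm f) (u t) p) (\<lambda>f p. u' p)) (at t)"
    by (intro has_real_derivative_ip_bdry) (use du face in \<open>auto intro!: DERIV_cmult has_real_derivative_mv\<close>)
  have pen: "((\<lambda>t. ip_bdry N h w Jm (\<lambda>f p. ?A f p * u t p) (\<lambda>f p. u t p))
      has_real_derivative ip_bdry N h w Jm (\<lambda>f p. ?A f p * u' p) (\<lambda>f p. u t p)
        + ip_bdry N h w Jm (\<lambda>f p. ?A f p * u t p) (\<lambda>f p. u' p)) (at t)"
    by (intro has_real_derivative_ip_bdry) (use face in \<open>auto intro!: DERIV_cmult\<close>)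
  have "((\<lambda>t. energy_form (u t) (u t)) has_real_derivative energy_form u' (u t) + energy_form (u t) u') (at t)"
    unfolding energy_form_def
    by (rule DERIV_cong[OF DERIV_add[OF DERIV_diff[OF DERIV_diff[OF DERIV_add[OF vol Rq] Dn] Dn] pen]])
       (simp add: sum.distrib algebra_simps)
  then show ?thesis
    by (simp add: energy_form_commute[of "u t"])
qed

lemma energy_D_eq:
  "energy_D N h w D Dh R mb Jm a b tauH tauR u ud
   = 1/2 * ip_vol N h w Jm (\<lambda>p. sqrt (a p) * ud p) (\<lambda>p. sqrt (a p) * ud p) + 1/2 * energy_form u u"
  unfolding energy_D_def energy_def energy_form_def by (simp add: algebra_simps)

lemma energy_D_nonneg: "0 \<le> energy_D N h w D Dh R mb Jm a b tauH tauR u ud"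
proof -
  have "0 \<le> (\<Sum>p\<in>grid N. Hfull h w p * Jdet Jm p * a p * (ud p)\<^sup>2)"
    using a_pos J_pos Hfull_pos unfolding Jdet_def
    by (intro sum_nonneg mult_nonneg_nonneg) (auto intro: less_imp_le)
  then have "0 \<le> ip_vol N h w Jm (\<lambda>p. sqrt (a p) * ud p) (\<lambda>p. sqrt (a p) * ud p)"
    using a_pos by (simp add: ip_vol_sqrt_weight less_imp_le power2_eq_square)
  then show ?thesis
    unfolding energy_D_eq using energy_form_nonneg[of u] by simp
qed

lemma energy_D_has_derivative_0:
  fixes u ud udd :: "real \<Rightarrow> ('d \<Rightarrow> nat) \<Rightarrow> real"
  assumes du: "\<forall>p\<in>grid N. ((\<lambda>t. u t p) has_real_derivative ud t p) (at t)"
    and dud: "\<forall>p\<in>grid N. ((\<lambda>t. ud t p) has_real_derivative udd t p) (at t)"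
    and scheme: "\<forall>p\<in>grid N. Jdet Jm p * a p * udd t p = rhs N h w D Dh Dxx mb Jm b tauH tauR (u t) p"
  shows "((\<lambda>t. energy_D N h w D Dh R mb Jm a b tauH tauR (u t) (ud t)) has_real_derivative 0) (at t)"
proof -
  have "ip_vol N h w Jm (\<lambda>p. sqrt (a p) * udd t p) (\<lambda>p. sqrt (a p) * ud t p)
      = (\<Sum>p\<in>grid N. ud t p * Hfull h w p * (Jdet Jm p * a p * udd t p))"
    using a_pos by (simp add: ip_vol_sqrt_weight less_imp_le mult_ac)
  also have "\<dots> = (\<Sum>r\<in>grid N. ud t r * Hfull h w r * rhs N h w D Dh Dxx mb Jm b tauH tauR (u t) r)"
    using scheme by simp
  finally have "ip_vol N h w Jm (\<lambda>p. sqrt (a p) * udd t p) (\<lambda>p. sqrt (a p) * ud t p)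
      = (\<Sum>r\<in>grid N. ud t r * Hfull h w r * rhs N h w D Dh Dxx mb Jm b tauH tauR (u t) r)" .
  moreover have "((\<lambda>t. ip_vol N h w Jm (\<lambda>p. sqrt (a p) * ud t p) (\<lambda>p. sqrt (a p) * ud t p)) has_real_derivative
      ip_vol N h w Jm (\<lambda>p. sqrt (a p) * udd t p) (\<lambda>p. sqrt (a p) * ud t p)
      + ip_vol N h w Jm (\<lambda>p. sqrt (a p) * ud t p) (\<lambda>p. sqrt (a p) * udd t p)) (at t)"
    using dud by (intro has_real_derivative_ip_vol) (auto intro: DERIV_cmult)
  ultimately have "((\<lambda>t. ip_vol N h w Jm (\<lambda>p. sqrt (a p) * ud t p) (\<lambda>p. sqrt (a p) * ud t p)) has_real_derivative
      2 * (\<Sum>r\<in>grid N. ud t r * Hfull h w r * rhs N h w D Dh Dxx mb Jm b tauH tauR (u t) r)) (at t)"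
    by (simp add: ip_vol_commute[of _ _ _ _ "\<lambda>p. sqrt (a p) * ud t p"])
  from DERIV_add[OF DERIV_cmult[OF this] DERIV_cmult[OF energy_form_has_derivative[OF du]], of "1/2" "1/2"]
  show ?thesis
    unfolding energy_D_eq using sum_rhs_add_energy_form_eq_0[of "ud t" "u t"] by simp
qed

end

theorem theorem1:
  fixes N s mb :: nat
    and h thetaR tauH tauR :: real
    and w :: "nat \<Rightarrow> real"
    and D Dh :: "nat \<Rightarrow> nat \<Rightarrow> real"
    and Dxx R :: "(nat \<Rightarrow> real) \<Rightarrow> nat \<Rightarrow> nat \<Rightarrow> real"
    and Jm :: "('d::finite \<Rightarrow> nat) \<Rightarrow> real^'d^'d"
    and a b :: "('d \<Rightarrow> nat) \<Rightarrow> real"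
  assumes sbp: "sbp_1d N h w s D Dh Dxx R"
    and PR: "prop_PR N h D Dh R mb thetaR"
    and thetaR_pos: "0 < thetaR"
    and mb_pos: "1 \<le> mb"
    and N_mb: "N \<ge> 2 * mb"
    and h_def: "h = 1 / (real N - 1)"
    and J_pos: "\<forall>p\<in>grid N. 0 < det (Jm p)"
    and a_pos: "\<forall>p\<in>grid N. 0 < a p"
    and b_pos: "\<forall>p\<in>grid N. 0 < b p"
    and tauH: "tauH \<ge> real CARD('d) / (h * w 0)"
    and tauR: "tauR \<ge> 1 / (h * thetaR)"
  shows "(\<forall>u ud. 0 \<le> energy_D N h w D Dh R mb Jm a b tauH tauR u ud)
       \<and> (\<forall>(T :: real set) (u :: real \<Rightarrow> ('d \<Rightarrow> nat) \<Rightarrow> real) ud udd.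
            open T \<longrightarrow>
            (\<forall>t\<in>T. \<forall>p\<in>grid N. ((\<lambda>t. u t p) has_real_derivative ud t p) (at t)
                              \<and> ((\<lambda>t. ud t p) has_real_derivative udd t p) (at t)) \<longrightarrow>
            (\<forall>t\<in>T. \<forall>p\<in>grid N.
               Jdet Jm p * a p * udd t p = rhs N h w D Dh Dxx mb Jm b tauH tauR (u t) p) \<longrightarrow>
            (\<forall>t\<in>T. ((\<lambda>t. energy_D N h w D Dh R mb Jm a b tauH tauR (u t) (ud t))
                       has_real_derivative 0) (at t)))"
proof -
  interpret curvilinear_scheme N s mb h thetaR w D Dh Dxx R tauH tauR Jm a b
    by unfold_locales (use assms in auto)
  show ?thesis
  proof (intro conjI allI impI ballI)
    fix u ud :: "('d \<Rightarrow> nat) \<Rightarrow> real"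
    show "0 \<le> energy_D N h w D Dh R mb Jm a b tauH tauR u ud"
      by (rule energy_D_nonneg)
  next
    fix T :: "real set" and u ud udd :: "real \<Rightarrow> ('d \<Rightarrow> nat) \<Rightarrow> real" and t
    assume "\<forall>t\<in>T. \<forall>p\<in>grid N. ((\<lambda>t. u t p) has_real_derivative ud t p) (at t)
                             \<and> ((\<lambda>t. ud t p) has_real_derivative udd t p) (at t)"
      and "\<forall>t\<in>T. \<forall>p\<in>grid N. Jdet Jm p * a p * udd t p = rhs N h w D Dh Dxx mb Jm b tauH tauR (u t) p"
      and "t \<in> T"
    then show "((\<lambda>t. energy_D N h w D Dh R mb Jm a b tauH tauR (u t) (ud t)) has_real_derivative 0) (at t)"
      by (intro energy_D_has_derivative_0) auto
  qed
qed

end
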